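(* Consider the state-dependent DMC with causal CSI at the transmitter described in the context. For every $R_K\geq 0$ and $B\geq 0$, the covert capacity with causal CSI satisfies $$C_{\mathrm{c}}\leq \max I(V;Y),$$ where the maximum is over PMFs $P_V$ on a finite set $\mathcal{V}$ with $|\mathcal{V}|\leq \min\{|\mathcal{X}|+|\mathcal{Y}|+|\mathcal{Z}|-2,\ (|\mathcal{X}|-1)\cdot|\mathcal{S}|+1\}$ and functions $x:\mathcal{V}\times\mathcal{S}\to\mathcal{X}$, evaluated under the joint distribution $P_S(s)P_V(v)\mathbbm{1}\{x=x(v,s)\}P_{Y,Z|S,X}(y,z|s,x)$ (so $V$ is independent of $S$), subject to $P_Z=Q_0$ and $\mathrm{E}[b(X)]\leq B$.
   Context: A state-dependent discrete memoryless channel consists of finite alphabets $\mathcal{X}$ (input), $\mathcal{S}$ (state), $\mathcal{Y}$ (receiver output), $\mathcal{Z}$ (warden output), a state PMF $P_S$, and a channel law $P_{Y,Z|S,X}$. Over $n$ uses, the state sequence $S^n$ is IID $\sim P_S$, and given $(X^n,S^n)$ the pairs $(Y_i,Z_i)$ are conditionally independent with law $P_{Y,Z|S,X}(\cdot,\cdot|S_i,X_i)$. A designated "no input" symbol $x_0\in\mathcal{X}$ is fixed, and $Q_0(z)=\sum_{s}P_S(s)P_{Z|S,X}(z|s,x_0)$; $Q_0^{\times n}$ is its $n$-fold product. It is assumed that $\mathrm{supp}(Q_0)=\mathcal{Z}$. A cost function $b:\mathcal{X}\to[0,\infty)$ is given, with $b(x^n)=\frac1n\sum_{i=1}^n b(x_i)$.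 A secret key $K$ uniform on $[1:2^{nR_K}]$ and a message $M$ uniform on $[1:2^{nR}]$ are mutually independent and independent of $S^n$; $K$ is known to transmitter and receiver, while $S^n$ is known only to the transmitter. With causal CSI, an $(2^{nR},2^{nR_K},n)$ code consists of an encoder producing $X_i$ as a function of $(M,K,S^i)$ (and possibly private randomness of the transmitter independent of $(M,K,S^n)$), $i\in[1:n]$, and a decoder mapping $(Y^n,K)$ to $\hat M$. With noncausal CSI, the encoder produces $X^n$ from $(M,K,S^n)$ (and possibly such private randomness). $P_e^{(n)}=P(\hat M\neq M)$, and $\widehat{P}_{Z^n}$ is the distribution of the warden's output $Z^n$ induced by the code. A rate $R$ is achievable (for given $R_K,B$) if there is a sequence of codes with $\limsup_{n}\mathrm{E}[b(X^n)]\leq B$, $P_e^{(n)}\to 0$, and $D(\widehat{P}_{Z^n}\|Q_0^{\times n})\to 0$. The covert capacity $C_{\mathrm{c}}$ (causal CSI) resp. $C_{\mathrm{nc}}$ (noncausal CSI) is the supremum of achievable rates. *)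

theory Defs
  imports Complex_Main "HOL-Library.Liminf_Limsup" "HOL-Library.Extended_Real"
begin

text \<open>Deterministic causal encoder: X_i = e m k (s_1 ... s_i).
  Messages and keys are indexed from 0.  A (possibly randomized) encoder is
  a finite mixture (weights w) over a finite set E of deterministic causal encoders;
  this captures arbitrary private randomness independent of (M,K,S^n).\<close>
type_synonym ('s,'x) cenc = "nat \<Rightarrow> nat \<Rightarrow> 's list \<Rightarrow> 'x"

definition lists_n :: "nat \<Rightarrow> 'a list set" where
  "lists_n n = {xs. length xs = n}"

definition xseq :: "('s,'x) cenc \<Rightarrow> nat \<Rightarrow> nat \<Rightarrow> 's list \<Rightarrow> 'x list" where
  "xseq e m k ss = map (\<lambda>i. e m k (take (Suc i) ss)) [0..<length ss]"

definition ps_n :: "('s \<Rightarrow> real) \<Rightarrow> 's list \<Rightarrow> real" where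
  "ps_n PS ss = (\<Prod>i<length ss. PS (ss ! i))"

definition ch_n :: "('s \<Rightarrow> 'x \<Rightarrow> 'y \<Rightarrow> 'z \<Rightarrow> real) \<Rightarrow> 's list \<Rightarrow> 'x list \<Rightarrow> 'y list \<Rightarrow> 'z list \<Rightarrow> real" where
  "ch_n W ss xs ys zs = (\<Prod>i<length ss. W (ss ! i) (xs ! i) (ys ! i) (zs ! i))"

text \<open>Size of the index set [1:2^{nR}], read as ceiling of 2^{nR}.\<close>
definition set_size :: "nat \<Rightarrow> real \<Rightarrow> nat" where
  "set_size n R = nat \<lceil>2 powr (real n * R)\<rceil>"

definition joint_prob ::
  "('s \<Rightarrow> real) \<Rightarrow> ('s \<Rightarrow> 'x \<Rightarrow> 'y \<Rightarrow> 'z \<Rightarrow> real) \<Rightarrow> nat \<Rightarrow> nat \<Rightarrow>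
   (('s,'x) cenc \<Rightarrow> real) \<Rightarrow> ('s,'x) cenc \<Rightarrow> nat \<Rightarrow> nat \<Rightarrow> 's list \<Rightarrow> 'y list \<Rightarrow> 'z list \<Rightarrow> real" where
  "joint_prob PS W M K w e m k ss ys zs =
     (1 / real M) * (1 / real K) * w e * ps_n PS ss * ch_n W ss (xseq e m k ss) ys zs"

definition valid_code :: "('s,'x) cenc set \<Rightarrow> (('s,'x) cenc \<Rightarrow> real) \<Rightarrow> bool" where
  "valid_code E w \<longleftrightarrow> finite E \<and> (\<forall>e\<in>E. 0 \<le> w e) \<and> sum w E = 1"

definition err_prob ::
  "('s \<Rightarrow> real) \<Rightarrow> ('s \<Rightarrow> 'x \<Rightarrow> 'y \<Rightarrow> 'z \<Rightarrow> real) \<Rightarrow> nat \<Rightarrow> nat \<Rightarrow> nat \<Rightarrow>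
   ('s,'x) cenc set \<Rightarrow> (('s,'x) cenc \<Rightarrow> real) \<Rightarrow> (nat \<Rightarrow> 'y list \<Rightarrow> nat) \<Rightarrow> real" where
  "err_prob PS W n M K E w dec =
     (\<Sum>m<M. \<Sum>k<K. \<Sum>e\<in>E. \<Sum>ss\<in>lists_n n. \<Sum>ys\<in>lists_n n. \<Sum>zs\<in>lists_n n.
        joint_prob PS W M K w e m k ss ys zs * (if dec k ys \<noteq> m then 1 else 0))"

definition out_z ::
  "('s \<Rightarrow> real) \<Rightarrow> ('s \<Rightarrow> 'x \<Rightarrow> 'y \<Rightarrow> 'z \<Rightarrow> real) \<Rightarrow> nat \<Rightarrow> nat \<Rightarrow> nat \<Rightarrow>
   ('s,'x) cenc set \<Rightarrow> (('s,'x) cenc \<Rightarrow> real) \<Rightarrow> 'z list \<Rightarrow> real" where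
  "out_z PS W n M K E w zs =
     (\<Sum>m<M. \<Sum>k<K. \<Sum>e\<in>E. \<Sum>ss\<in>lists_n n. \<Sum>ys\<in>lists_n n.
        joint_prob PS W M K w e m k ss ys zs)"

definition exp_cost ::
  "('s \<Rightarrow> real) \<Rightarrow> ('s \<Rightarrow> 'x \<Rightarrow> 'y \<Rightarrow> 'z \<Rightarrow> real) \<Rightarrow> ('x \<Rightarrow> real) \<Rightarrow> nat \<Rightarrow> nat \<Rightarrow> nat \<Rightarrow>
   ('s,'x) cenc set \<Rightarrow> (('s,'x) cenc \<Rightarrow> real) \<Rightarrow> real" where
  "exp_cost PS W b n M K E w =
     (\<Sum>m<M. \<Sum>k<K. \<Sum>e\<in>E. \<Sum>ss\<in>lists_n n. \<Sum>ys\<in>lists_n n. \<Sum>zs\<in>lists_n n.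
        joint_prob PS W M K w e m k ss ys zs *
        ((\<Sum>i<n. b (xseq e m k ss ! i)) / real n))"

definition Q0 :: "('s \<Rightarrow> real) \<Rightarrow> ('s \<Rightarrow> 'x \<Rightarrow> 'y \<Rightarrow> 'z \<Rightarrow> real) \<Rightarrow> 'x \<Rightarrow> 'z \<Rightarrow> real" where
  "Q0 PS W x0 z = (\<Sum>s\<in>UNIV. PS s * (\<Sum>y\<in>UNIV. W s x0 y z))"

definition Q0_n :: "('s \<Rightarrow> real) \<Rightarrow> ('s \<Rightarrow> 'x \<Rightarrow> 'y \<Rightarrow> 'z \<Rightarrow> real) \<Rightarrow> 'x \<Rightarrow> 'z list \<Rightarrow> real" where
  "Q0_n PS W x0 zs = (\<Prod>i<length zs. Q0 PS W x0 (zs ! i))"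

definition kl_div :: "nat \<Rightarrow> ('a list \<Rightarrow> real) \<Rightarrow> ('a list \<Rightarrow> real) \<Rightarrow> real" where
  "kl_div n P Q = (\<Sum>zs\<in>lists_n n. if P zs = 0 then 0 else P zs * log 2 (P zs / Q zs))"

definition achievable_causal ::
  "('s \<Rightarrow> real) \<Rightarrow> ('s \<Rightarrow> 'x \<Rightarrow> 'y \<Rightarrow> 'z \<Rightarrow> real) \<Rightarrow> 'x \<Rightarrow> ('x \<Rightarrow> real) \<Rightarrow> real \<Rightarrow> real \<Rightarrow> real \<Rightarrow> bool" where
  "achievable_causal PS W x0 b RK B R \<longleftrightarrow>
     (\<exists>(E :: nat \<Rightarrow> ('s,'x) cenc set) w (dec :: nat \<Rightarrow> nat \<Rightarrow> 'y list \<Rightarrow> nat).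
        (\<forall>n. valid_code (E n) (w n)) \<and>
        limsup (\<lambda>n. ereal (exp_cost PS W b n (set_size n R) (set_size n RK) (E n) (w n))) \<le> ereal B \<and>
        (\<lambda>n. err_prob PS W n (set_size n R) (set_size n RK) (E n) (w n) (dec n)) \<longlonglongrightarrow> 0 \<and>
        (\<lambda>n. kl_div n (out_z PS W n (set_size n R) (set_size n RK) (E n) (w n)) (Q0_n PS W x0)) \<longlonglongrightarrow> 0)"

definition covert_capacity_causal ::
  "('s \<Rightarrow> real) \<Rightarrow> ('s \<Rightarrow> 'x \<Rightarrow> 'y \<Rightarrow> 'z \<Rightarrow> real) \<Rightarrow> 'x \<Rightarrow> ('x \<Rightarrow> real) \<Rightarrow> real \<Rightarrow> real \<Rightarrow> ereal" where
  "covert_capacity_causal PS W x0 b RK B = Sup (ereal ` {R. achievable_causal PS W x0 b RK B R})"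

definition mutual_info :: "('a \<Rightarrow> 'b \<Rightarrow> real) \<Rightarrow> 'a set \<Rightarrow> 'b set \<Rightarrow> real" where
  "mutual_info P A B = (\<Sum>a\<in>A. \<Sum>b\<in>B.
     if P a b = 0 then 0
     else P a b * log 2 (P a b / ((\<Sum>b'\<in>B. P a b') * (\<Sum>a'\<in>A. P a' b))))"

text \<open>V ranges over {0..<k}; P(v,y) = sum_s P_S(s) P_V(v) P_{Y|S,X}(y|s,x(v,s)).\<close>
definition joint_VY :: "('s \<Rightarrow> real) \<Rightarrow> ('s \<Rightarrow> 'x \<Rightarrow> 'y \<Rightarrow> 'z \<Rightarrow> real) \<Rightarrow> (nat \<Rightarrow> real) \<Rightarrow> (nat \<Rightarrow> 's \<Rightarrow> 'x) \<Rightarrow> nat \<Rightarrow> 'y \<Rightarrow> real" where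
  "joint_VY PS W PV xf v y = (\<Sum>s\<in>UNIV. PS s * PV v * (\<Sum>z\<in>UNIV. W s (xf v s) y z))"

definition causal_bound ::
  "('s \<Rightarrow> real) \<Rightarrow> ('s \<Rightarrow> 'x \<Rightarrow> 'y \<Rightarrow> 'z \<Rightarrow> real) \<Rightarrow> 'x \<Rightarrow> ('x \<Rightarrow> real) \<Rightarrow> real \<Rightarrow> ereal" where
  "causal_bound PS W x0 b B = Sup (ereal ` {mutual_info (joint_VY PS W PV xf) {..<k} UNIV | k PV xf.
       1 \<le> k \<and>
       k \<le> min (card (UNIV :: 'x set) + card (UNIV :: 'y set) + card (UNIV :: 'z set) - 2) ((card (UNIV :: 'x set) - 1) * card (UNIV :: 's set) + 1) \<and>
       (\<forall>v<k. 0 \<le> PV v) \<and> (\<Sum>v<k. PV v) = 1 \<and>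
       (\<forall>z. (\<Sum>v<k. \<Sum>s\<in>UNIV. PV v * PS s * (\<Sum>y\<in>UNIV. W s (xf v s) y z)) = Q0 PS W x0 z) \<and>
       (\<Sum>v<k. \<Sum>s\<in>UNIV. PV v * PS s * b (xf v s)) \<le> B})"

end

theory Submission
  imports Defs "HOL-Analysis.Analysis" "HOL-Real_Asymp.Real_Asymp"
begin

text \<open>For a code of length n, let U_i = e(M,K,S^{i-1},-) be the Shannon strategy used at
  time i; it is independent of S_i, so (U_i,S_i,X_i,Y_i,Z_i) has the single-letter law
  P_{U_i}(u) P_S(s) 1{x = u(s)} W(y,z|s,x).  Let p be the time average of the laws P_{U_i}.
  Applying ln t \<le> t - 1 to the likelihood ratio between the true law and an auxiliary law built
  from a guess of the decoder and the i.i.d. output law of p gives the Fano-type bound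
  (1 - P_e) ln |M| - ln 2 \<le> n I_p(U;Y); the same inequality gives
  D(P_{Z^n} || Q_0^n) \<ge> n D(P_Z || Q_0) for the output of p, and the expected cost of the code is
  the cost of p.  Along a subsequence p converges, and in the limit covertness forces P_Z = Q_0
  (Gibbs), the cost is at most B and I(U;Y) is at least the rate.  Finally all constraints are
  linear in p and I_p(U;Y) is affine along directions preserving P_Y, so moving p along a
  nonzero direction of the kernel of these linear constraints removes a point of its support
  without decreasing I; counting the constraints (either P_Y, P_Z and the cost, or the
  marginals P(U(s) = x)) yields the two cardinality bounds.\<close>

section \<open>Finite sums and supports\<close>

lemma finite_lists_n[simp]: "finite (lists_n n :: ('a::finite) list set)"
proof -
  have "{xs :: 'a list. length xs = n} = {xs. set xs \<subseteq> UNIV \<and> length xs = n}" by auto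
  thus ?thesis unfolding lists_n_def using finite_lists_length_eq[of "UNIV :: 'a set" n] by simp
qed

lemma lists_n_0[simp]: "lists_n 0 = {[]}"
  unfolding lists_n_def by auto

lemma sum_lists_n_snoc:
  fixes f :: "('a::finite) list \<Rightarrow> 'b::comm_monoid_add"
  shows "(\<Sum>xs\<in>lists_n (Suc n). f xs) = (\<Sum>xs\<in>lists_n n. \<Sum>x\<in>UNIV. f (xs @ [x]))"
proof -
  have bij: "bij_betw (\<lambda>(xs,x). xs @ [x]) (lists_n n \<times> UNIV) (lists_n (Suc n))"
  proof (rule bij_betwI[where g="\<lambda>ys. (butlast ys, last ys)"])
    show "(\<lambda>(xs, x). xs @ [x]) \<in> lists_n n \<times> UNIV \<rightarrow> lists_n (Suc n)" by (auto simp: lists_n_def)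
    show "(\<lambda>ys. (butlast ys, last ys)) \<in> lists_n (Suc n) \<rightarrow> lists_n n \<times> UNIV" by (auto simp: lists_n_def)
    show "\<And>p. p \<in> lists_n n \<times> UNIV \<Longrightarrow> (butlast ((\<lambda>(xs, x). xs @ [x]) p), last ((\<lambda>(xs, x). xs @ [x]) p)) = p" by auto
    show "\<And>ys. ys \<in> lists_n (Suc n) \<Longrightarrow> (\<lambda>(xs, x). xs @ [x]) (butlast ys, last ys) = ys"
      by (auto simp: lists_n_def intro!: append_butlast_last_id)
  qed
  have "(\<Sum>xs\<in>lists_n (Suc n). f xs) = (\<Sum>p\<in>lists_n n \<times> UNIV. f ((\<lambda>(xs,x). xs @ [x]) p))"
    using sum.reindex_bij_betw[OF bij, of f] by simp
  also have "\<dots> = (\<Sum>xs\<in>lists_n n. \<Sum>x\<in>UNIV. f (xs @ [x]))"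
    by (subst sum.cartesian_product) (auto intro!: sum.cong)
  finally show ?thesis .
qed

lemma sum_lists_n_append:
  fixes f :: "('a::finite) list \<Rightarrow> 'b::comm_monoid_add"
  shows "(\<Sum>xs\<in>lists_n (i + j). f xs) = (\<Sum>a\<in>lists_n i. \<Sum>c\<in>lists_n j. f (a @ c))"
proof -
  have bij: "bij_betw (\<lambda>(a,c). a @ c) (lists_n i \<times> lists_n j) (lists_n (i + j))"
  proof (rule bij_betwI[where g="\<lambda>ys. (take i ys, drop i ys)"])
    show "(\<lambda>(a, c). a @ c) \<in> lists_n i \<times> lists_n j \<rightarrow> lists_n (i + j)" by (auto simp: lists_n_def)
    show "(\<lambda>ys. (take i ys, drop i ys)) \<in> lists_n (i + j) \<rightarrow> lists_n i \<times> lists_n j" by (auto simp: lists_n_def)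
    show "\<And>p. p \<in> lists_n i \<times> lists_n j \<Longrightarrow> (take i ((\<lambda>(a, c). a @ c) p), drop i ((\<lambda>(a, c). a @ c) p)) = p"
      by (auto simp: lists_n_def)
    show "\<And>ys. ys \<in> lists_n (i + j) \<Longrightarrow> (\<lambda>(a, c). a @ c) (take i ys, drop i ys) = ys" by auto
  qed
  have "(\<Sum>xs\<in>lists_n (i+j). f xs) = (\<Sum>p\<in>lists_n i \<times> lists_n j. f ((\<lambda>(a,c). a @ c) p))"
    using sum.reindex_bij_betw[OF bij, of f] by simp
  also have "\<dots> = (\<Sum>a\<in>lists_n i. \<Sum>c\<in>lists_n j. f (a @ c))"
    by (subst sum.cartesian_product) (auto intro!: sum.cong)
  finally show ?thesis .
qed

lemma sum_lists_n_Cons: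
  fixes f :: "('a::finite) list \<Rightarrow> 'b::comm_monoid_add"
  shows "(\<Sum>xs\<in>lists_n (Suc n). f xs) = (\<Sum>x\<in>UNIV. \<Sum>xs\<in>lists_n n. f (x # xs))"
proof -
  have "(\<Sum>xs\<in>lists_n (1 + n). f xs) = (\<Sum>a\<in>lists_n 1. \<Sum>c\<in>lists_n n. f (a @ c))"
    by (rule sum_lists_n_append)
  also have "\<dots> = (\<Sum>x\<in>UNIV. \<Sum>c\<in>lists_n n. f (x # c))"
    using sum_lists_n_snoc[where n=0 and f="\<lambda>a. \<Sum>c\<in>lists_n n. f (a @ c)"] by simp
  finally show ?thesis by simp
qed

lemma sum_prod_lists_n:
  fixes F :: "nat \<Rightarrow> 'a::finite \<Rightarrow> 'b::comm_semiring_1"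
  shows "(\<Sum>xs\<in>lists_n n. \<Prod>i<n. F i (xs ! i)) = (\<Prod>i<n. \<Sum>x\<in>UNIV. F i x)"
proof (induction n)
  case 0 thus ?case by simp
next
  case (Suc n)
  have "(\<Sum>xs\<in>lists_n (Suc n). \<Prod>i<Suc n. F i (xs ! i))
      = (\<Sum>xs\<in>lists_n n. \<Sum>x\<in>UNIV. \<Prod>i<Suc n. F i ((xs @ [x]) ! i))"
    by (rule sum_lists_n_snoc)
  also have "\<dots> = (\<Sum>xs\<in>lists_n n. \<Sum>x\<in>UNIV. (\<Prod>i<n. F i (xs ! i)) * F n x)"
  proof (intro sum.cong refl)
    fix xs :: "'a list" and x :: 'a assume "xs \<in> lists_n n"
    hence l: "length xs = n" by (simp add: lists_n_def)
    have "(\<Prod>i<Suc n. F i ((xs @ [x]) ! i)) = (\<Prod>i<n. F i ((xs @ [x]) ! i)) * F n ((xs @ [x]) ! n)"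
      by simp
    also have "(\<Prod>i<n. F i ((xs @ [x]) ! i)) = (\<Prod>i<n. F i (xs ! i))"
      by (intro prod.cong refl) (simp add: l nth_append)
    finally show "(\<Prod>i<Suc n. F i ((xs @ [x]) ! i)) = (\<Prod>i<n. F i (xs ! i)) * F n x"
      using l by (simp add: nth_append)
  qed
  also have "\<dots> = (\<Sum>xs\<in>lists_n n. \<Prod>i<n. F i (xs ! i)) * (\<Sum>x\<in>UNIV. F n x)"
    by (simp add: sum_product)
  finally show ?case using Suc by simp
qed

lemma sum_prod_lists_n_pairs:
  fixes F :: "nat \<Rightarrow> 'a::finite \<Rightarrow> 'c::finite \<Rightarrow> 'b::comm_semiring_1"
  shows "(\<Sum>ys\<in>lists_n n. \<Sum>zs\<in>lists_n n. \<Prod>i<n. F i (ys ! i) (zs ! i)) = (\<Prod>i<n. \<Sum>y\<in>UNIV. \<Sum>z\<in>UNIV. F i y z)"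
proof (induction n)
  case 0 thus ?case by simp
next
  case (Suc n)
  have "(\<Sum>ys\<in>lists_n (Suc n). \<Sum>zs\<in>lists_n (Suc n). \<Prod>i<Suc n. F i (ys ! i) (zs ! i))
      = (\<Sum>ys\<in>lists_n n. \<Sum>y\<in>UNIV. \<Sum>zs\<in>lists_n n. \<Sum>z\<in>UNIV. \<Prod>i<Suc n. F i ((ys @ [y]) ! i) ((zs @ [z]) ! i))"
    by (simp add: sum_lists_n_snoc)
  also have "\<dots> = (\<Sum>ys\<in>lists_n n. \<Sum>y\<in>UNIV. \<Sum>zs\<in>lists_n n. \<Sum>z\<in>UNIV. (\<Prod>i<n. F i (ys ! i) (zs ! i)) * F n y z)"
  proof (intro sum.cong refl)
    fix ys :: "'a list" and y :: 'a and zs :: "'c list" and z :: 'c assume "ys \<in> lists_n n" "zs \<in> lists_n n"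
    hence l: "length ys = n" "length zs = n" by (auto simp add: lists_n_def)
    have "(\<Prod>i<n. F i ((ys @ [y]) ! i) ((zs @ [z]) ! i)) = (\<Prod>i<n. F i (ys ! i) (zs ! i))"
      by (intro prod.cong refl) (simp add: l nth_append)
    thus "(\<Prod>i<Suc n. F i ((ys @ [y]) ! i) ((zs @ [z]) ! i)) = (\<Prod>i<n. F i (ys ! i) (zs ! i)) * F n y z"
      using l by (simp add: nth_append)
  qed
  also have "\<dots> = (\<Sum>ys\<in>lists_n n. \<Sum>zs\<in>lists_n n. \<Prod>i<n. F i (ys ! i) (zs ! i)) * (\<Sum>y\<in>UNIV. \<Sum>z\<in>UNIV. F n y z)"
  proof -
    have "\<And>ys. (\<Sum>y\<in>UNIV. \<Sum>zs\<in>lists_n n. \<Sum>z\<in>UNIV. (\<Prod>i<n. F i (ys ! i) (zs ! i)) * F n y z)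
       = (\<Sum>zs\<in>lists_n n. (\<Prod>i<n. F i (ys ! i) (zs ! i)) * (\<Sum>y\<in>UNIV. \<Sum>z\<in>UNIV. F n y z))"
      by (subst sum.swap) (simp add: sum_distrib_left)
    thus ?thesis by (simp add: sum_distrib_right)
  qed
  finally show ?case using Suc by simp
qed

lemma sum_regroup_by:
  fixes h :: "'a \<Rightarrow> real" and \<phi> :: "'a \<Rightarrow> 'u::finite"
  assumes "finite A"
  shows "(\<Sum>a\<in>A. h a * G (\<phi> a)) = (\<Sum>u\<in>UNIV. (\<Sum>a\<in>A. h a * (if \<phi> a = u then 1 else 0)) * G u)"
proof -
  have "(\<Sum>u\<in>UNIV. (\<Sum>a\<in>A. h a * (if \<phi> a = u then 1 else 0)) * G u)
      = (\<Sum>a\<in>A. \<Sum>u\<in>UNIV. h a * (if \<phi> a = u then G u else 0))"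
    by (subst sum.swap) (auto simp: sum_distrib_right intro!: sum.cong)
  also have "\<dots> = (\<Sum>a\<in>A. h a * G (\<phi> a))"
    by (simp add: if_distrib cong: if_cong)
  finally show ?thesis by simp
qed

lemma sum_indicator_mult: "(\<Sum>u\<in>UNIV. h * (if a = u then 1 else 0)) = (h::real)" for a :: "'u::finite"
proof -
  have "(\<Sum>u\<in>UNIV. h * (if a = u then 1 else 0)) = (\<Sum>u\<in>UNIV. if a = u then h else 0)"
    by (rule sum.cong) auto
  thus ?thesis by simp
qed

lemma sum3_swap:
  "(\<Sum>m\<in>A. \<Sum>k\<in>B. \<Sum>e\<in>C. \<Sum>u\<in>D. f m k e u) = (\<Sum>u\<in>D. \<Sum>m\<in>A. \<Sum>k\<in>B. \<Sum>e\<in>C. f m k e u)"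
proof -
  have "(\<Sum>m\<in>A. \<Sum>k\<in>B. \<Sum>e\<in>C. \<Sum>u\<in>D. f m k e u) = (\<Sum>m\<in>A. \<Sum>k\<in>B. \<Sum>u\<in>D. \<Sum>e\<in>C. f m k e u)"
    by (intro sum.cong refl) (rule sum.swap)
  also have "\<dots> = (\<Sum>m\<in>A. \<Sum>u\<in>D. \<Sum>k\<in>B. \<Sum>e\<in>C. f m k e u)"
    by (intro sum.cong refl) (rule sum.swap)
  also have "\<dots> = (\<Sum>u\<in>D. \<Sum>m\<in>A. \<Sum>k\<in>B. \<Sum>e\<in>C. f m k e u)"
    by (rule sum.swap)
  finally show ?thesis .
qed

lemma sum6_swap:
  "(\<Sum>z\<in>Z. \<Sum>m\<in>A. \<Sum>k\<in>B. \<Sum>e\<in>C. \<Sum>s\<in>D. \<Sum>y\<in>F. g z m k e s y) = (\<Sum>m\<in>A. \<Sum>k\<in>B. \<Sum>e\<in>C. \<Sum>s\<in>D. \<Sum>y\<in>F. \<Sum>z\<in>Z. g z m k e s y)"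
proof -
  have "(\<Sum>z\<in>Z. \<Sum>m\<in>A. \<Sum>k\<in>B. \<Sum>e\<in>C. \<Sum>s\<in>D. \<Sum>y\<in>F. g z m k e s y) = (\<Sum>m\<in>A. \<Sum>z\<in>Z. \<Sum>k\<in>B. \<Sum>e\<in>C. \<Sum>s\<in>D. \<Sum>y\<in>F. g z m k e s y)"
    by (rule sum.swap)
  also have "\<dots> = (\<Sum>m\<in>A. \<Sum>k\<in>B. \<Sum>z\<in>Z. \<Sum>e\<in>C. \<Sum>s\<in>D. \<Sum>y\<in>F. g z m k e s y)"
    by (intro sum.cong refl) (rule sum.swap)
  also have "\<dots> = (\<Sum>m\<in>A. \<Sum>k\<in>B. \<Sum>e\<in>C. \<Sum>z\<in>Z. \<Sum>s\<in>D. \<Sum>y\<in>F. g z m k e s y)"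
    by (intro sum.cong refl) (rule sum.swap)
  also have "\<dots> = (\<Sum>m\<in>A. \<Sum>k\<in>B. \<Sum>e\<in>C. \<Sum>s\<in>D. \<Sum>z\<in>Z. \<Sum>y\<in>F. g z m k e s y)"
    by (intro sum.cong refl) (rule sum.swap)
  also have "\<dots> = (\<Sum>m\<in>A. \<Sum>k\<in>B. \<Sum>e\<in>C. \<Sum>s\<in>D. \<Sum>y\<in>F. \<Sum>z\<in>Z. g z m k e s y)"
    by (intro sum.cong refl) (rule sum.swap)
  finally show ?thesis .
qed

text \<open>One step of Gaussian elimination, with pivot c j a0.\<close>
lemma orthogonal_extend_at_pivot:
  fixes c :: "'j \<Rightarrow> 'u \<Rightarrow> real"
  assumes A: "finite A" "a0 \<in> A" and pivot: "c j a0 \<noteq> 0"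
    and d'_supp: "\<forall>u. u \<notin> A - {a0} \<longrightarrow> d' u = 0"
    and d'_orth: "\<forall>j'\<in>J. (\<Sum>u\<in>A - {a0}. d' u * (c j' u - c j' a0 * c j u / c j a0)) = 0"
  shows "\<exists>d. (\<forall>u. u \<notin> A \<longrightarrow> d u = 0) \<and> (\<forall>u\<in>A - {a0}. d u = d' u)
           \<and> (\<forall>j'\<in>insert j J. (\<Sum>u\<in>A. d u * c j' u) = 0)"
proof -
  define lam where "lam = - (\<Sum>u\<in>A - {a0}. d' u * c j u) / c j a0"
  define d where "d u = d' u + (if u = a0 then lam else 0)" for u
  have dA: "(\<Sum>u\<in>A. d u * g u) = (\<Sum>u\<in>A - {a0}. d' u * g u) + lam * g a0" for g
  proof -
    have "(\<Sum>u\<in>A. d u * g u) = d a0 * g a0 + (\<Sum>u\<in>A - {a0}. d u * g u)"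
      using A by (simp add: sum.remove)
    also have "(\<Sum>u\<in>A - {a0}. d u * g u) = (\<Sum>u\<in>A - {a0}. d' u * g u)"
      by (intro sum.cong refl) (simp add: d_def)
    also have "d a0 = lam" using d'_supp by (simp add: d_def)
    finally show ?thesis by simp
  qed
  have "(\<Sum>u\<in>A. d u * c j' u) = 0" if "j' \<in> J" for j'
  proof -
    have "(\<Sum>u\<in>A - {a0}. d' u * c j' u)
        = (\<Sum>u\<in>A - {a0}. d' u * (c j' u - c j' a0 * c j u / c j a0)) + (c j' a0 / c j a0) * (\<Sum>u\<in>A - {a0}. d' u * c j u)"
    proof -
      have "d' u * c j' u = d' u * (c j' u - c j' a0 * c j u / c j a0) + (c j' a0 / c j a0) * (d' u * c j u)" for u
        using pivot by (simp add: field_simps)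
      thus ?thesis by (simp add: sum.distrib sum_distrib_left)
    qed
    also have "\<dots> = (c j' a0 / c j a0) * (\<Sum>u\<in>A - {a0}. d' u * c j u)" using d'_orth that by simp
    finally show ?thesis unfolding dA lam_def using pivot by (simp add: field_simps)
  qed
  moreover have "(\<Sum>u\<in>A. d u * c j u) = 0" unfolding dA lam_def using pivot by simp
  moreover have "\<forall>u. u \<notin> A \<longrightarrow> d u = 0" using d'_supp A by (auto simp: d_def)
  ultimately show ?thesis by (intro exI[of _ d]) (auto simp: d_def)
qed

lemma exists_nonzero_orthogonal:
  fixes c :: "'j \<Rightarrow> 'u \<Rightarrow> real"
  assumes "finite J"
  shows "finite A \<Longrightarrow> card J < card A \<Longrightarrow>
    \<exists>d. (\<forall>u. u \<notin> A \<longrightarrow> d u = 0) \<and> (\<exists>u\<in>A. d u \<noteq> 0) \<and> (\<forall>j\<in>J. (\<Sum>u\<in>A. d u * c j u) = 0)"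
  using assms
proof (induction J arbitrary: A c rule: finite_induct)
  case empty
  then obtain u0 where "u0 \<in> A" by fastforce
  thus ?case by (intro exI[of _ "\<lambda>u. if u = u0 then 1 else 0"]) auto
next
  case (insert j J A c)
  show ?case
  proof (cases "\<forall>u\<in>A. c j u = 0")
    case True
    have "card J < card A" using insert by simp
    then obtain d where "\<forall>u. u \<notin> A \<longrightarrow> d u = 0" "\<exists>u\<in>A. d u \<noteq> 0" "\<forall>j\<in>J. (\<Sum>u\<in>A. d u * c j u) = 0"
      using insert.IH[OF insert.prems(1)] by blast
    thus ?thesis using True by (intro exI[of _ d]) auto
  next
    case False
    then obtain a0 where a0: "a0 \<in> A" "c j a0 \<noteq> 0" by blast
    have "card J < card (A - {a0})" using insert a0 by simp
    then obtain d' where d': "\<forall>u. u \<notin> A - {a0} \<longrightarrow> d' u = 0" "\<exists>u\<in>A - {a0}. d' u \<noteq> 0"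
        "\<forall>j'\<in>J. (\<Sum>u\<in>A - {a0}. d' u * (c j' u - c j' a0 * c j u / c j a0)) = 0"
      using insert.IH[of "A - {a0}" "\<lambda>j' u. c j' u - c j' a0 * c j u / c j a0"] insert.prems(1) by blast
    then obtain d where "\<forall>u. u \<notin> A \<longrightarrow> d u = 0" "\<forall>u\<in>A - {a0}. d u = d' u"
        "\<forall>j'\<in>insert j J. (\<Sum>u\<in>A. d u * c j' u) = 0"
      using orthogonal_extend_at_pivot[of A a0 c j d' J, OF insert.prems(1) a0 d'(1,3)] by blast
    thus ?thesis using d'(2) by (metis DiffD1)
  qed
qed

definition support :: "('a \<Rightarrow> real) \<Rightarrow> 'a set" where
  "support p = {u. p u \<noteq> 0}"

lemma exists_nonzero_orthogonal_on_support:
  fixes c :: "'j \<Rightarrow> 'u::finite \<Rightarrow> real"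
  assumes "finite J" and "card J < card (support p)"
  shows "\<exists>d. (\<forall>u. p u = 0 \<longrightarrow> d u = 0) \<and> (\<exists>u. d u \<noteq> 0) \<and> (\<forall>j\<in>J. (\<Sum>u\<in>UNIV. d u * c j u) = 0)"
proof -
  obtain d where d: "\<forall>u. u \<notin> support p \<longrightarrow> d u = 0" "\<exists>u\<in>support p. d u \<noteq> 0"
      "\<forall>j\<in>J. (\<Sum>u\<in>support p. d u * c j u) = 0"
    using exists_nonzero_orthogonal[of J "support p" c] assms by auto
  have "(\<Sum>u\<in>support p. d u * c j u) = (\<Sum>u\<in>UNIV. d u * c j u)" for j
    using d(1) by (intro sum.mono_neutral_left) auto
  thus ?thesis using d by (auto simp: support_def)
qed

lemma exists_step_to_boundary:
  fixes p d :: "'a::finite \<Rightarrow> real"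
  assumes p_nn: "\<And>u. 0 \<le> p u" and d_supp: "\<And>u. p u = 0 \<Longrightarrow> d u = 0"
    and d_sum: "(\<Sum>u\<in>UNIV. d u) = 0" and d_nz: "d u0 \<noteq> 0"
  shows "\<exists>t>0. (\<forall>u. 0 \<le> p u + t * d u) \<and> card (support (\<lambda>u. p u + t * d u)) < card (support p)"
proof -
  have "\<exists>u. d u < 0"
  proof (rule ccontr)
    assume "\<nexists>u. d u < 0"
    hence "\<forall>u\<in>UNIV. d u = 0" using d_sum sum_nonneg_eq_0_iff[of UNIV d] by (simp add: not_less)
    thus False using d_nz by simp
  qed
  define N where "N = {u. d u < 0}"
  have N: "finite N" "N \<noteq> {}" using \<open>\<exists>u. d u < 0\<close> by (auto simp: N_def)
  define t where "t = Min ((\<lambda>u. p u / (- d u)) ` N)"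
  have "t \<in> (\<lambda>u. p u / (- d u)) ` N" unfolding t_def by (rule Min_in) (use N in auto)
  then obtain us where us: "us \<in> N" "t = p us / (- d us)" by blast
  have t_le: "t \<le> p u / (- d u)" if "u \<in> N" for u
    unfolding t_def using N that by simp
  have p_pos: "0 < p u" if "u \<in> N" for u
  proof -
    have "p u \<noteq> 0" using that d_supp by (auto simp: N_def)
    thus ?thesis using p_nn[of u] by simp
  qed
  have t_pos: "0 < t" using us p_pos[OF us(1)] by (simp add: N_def divide_pos_neg)
  have nn: "0 \<le> p u + t * d u" for u
  proof (cases "u \<in> N")
    case True
    hence "t * (- d u) \<le> p u" using t_le[OF True] by (simp add: N_def field_simps)
    thus ?thesis by simp
  next
    case False thus ?thesis using p_nn[of u] t_pos by (simp add: N_def)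
  qed
  have "support (\<lambda>u. p u + t * d u) \<subseteq> support p - {us}"
    using us d_supp by (auto simp: support_def N_def field_simps)
  hence "card (support (\<lambda>u. p u + t * d u)) \<le> card (support p - {us})" by (intro card_mono) auto
  also have "\<dots> < card (support p)"
    using p_pos[OF us(1)] by (intro card_Diff1_less) (auto simp: support_def)
  finally show ?thesis using t_pos nn by blast
qed

lemma sum_support_reindex:
  fixes p :: "'a::finite \<Rightarrow> real"
  assumes h: "bij_betw h {..<k} (support p)"
  shows "(\<Sum>v<k. p (h v) * F (h v)) = (\<Sum>u\<in>UNIV. p u * F u)"
proof -
  have "(\<Sum>v<k. p (h v) * F (h v)) = (\<Sum>u\<in>support p. p u * F u)"
    by (rule sum.reindex_bij_betw[OF h])
  also have "\<dots> = (\<Sum>u\<in>UNIV. p u * F u)"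
    by (rule sum.mono_neutral_left) (auto simp: support_def)
  finally show ?thesis .
qed

lemma mutual_info_summand_eq:
  fixes a t q :: real
  assumes "0 \<le> a" "0 \<le> t" "a * t \<le> q"
  shows "(if a * t = 0 then 0 else a * t * log 2 (a * t / (a * q))) = (a * t * ln t - a * t * ln q) / ln 2"
proof (cases "a * t = 0")
  case False
  hence "0 < a" "0 < t" using assms by (auto simp: order_le_neq_trans)
  moreover from this have "0 < q" using assms(3) by (smt (verit) mult_pos_pos)
  ultimately show ?thesis using False by (simp add: log_def ln_div right_diff_distrib diff_divide_distrib)
qed simp

section \<open>Entropy and limits\<close>

lemma isCont_xlnx: "isCont (\<lambda>t::real. t * ln t) x"
proof (cases "x = 0")
  case False thus ?thesis by (intro continuous_intros isCont_ln)
next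
  case True
  have r: "((\<lambda>t::real. t * ln t) \<longlongrightarrow> 0) (at_right 0)" by real_asymp
  have l: "((\<lambda>t::real. t * ln t) \<longlongrightarrow> 0) (at_left 0)"
  proof -
    \<comment> \<open>ln is even on the reals (ln (- t) = ln t), so the left limit mirrors the right one.\<close>
    have "((\<lambda>t::real. (- t) * ln (- t)) \<longlongrightarrow> 0) (at_left 0)" by real_asymp
    moreover have "(\<lambda>t::real. (- t) * ln (- t)) = (\<lambda>t. - (t * ln t))" by (simp add: ln_minus)
    ultimately have "((\<lambda>t::real. - (t * ln t)) \<longlongrightarrow> 0) (at_left 0)" by simp
    hence "((\<lambda>t::real. - (- (t * ln t))) \<longlongrightarrow> - 0) (at_left 0)" by (intro tendsto_minus)
    thus ?thesis by simp
  qed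
  have "((\<lambda>t::real. t * ln t) \<longlongrightarrow> 0) (at 0)" by (rule filterlim_split_at[OF l r])
  thus ?thesis using True by (simp add: isCont_def)
qed

lemma tendsto_xlnx: "(f \<longlongrightarrow> (a::real)) F \<Longrightarrow> ((\<lambda>n. f n * ln (f n)) \<longlongrightarrow> a * ln a) F"
  using isCont_tendsto_compose[OF isCont_xlnx[of a]] by blast

lemma convergent_subseq_finite:
  fixes f :: "nat \<Rightarrow> 'a::finite \<Rightarrow> real"
  assumes bd: "\<And>n u. 0 \<le> f n u \<and> f n u \<le> 1"
  shows "\<exists>r L. strict_mono r \<and> (\<forall>u. (\<lambda>j. f (r j) u) \<longlonglongrightarrow> L u)"
proof -
  have "\<And>S::'a set. finite S \<Longrightarrow> \<exists>r L. strict_mono r \<and> (\<forall>u\<in>S. (\<lambda>j. f (r j) u) \<longlonglongrightarrow> L u)"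
  proof -
    fix S :: "'a set" assume "finite S"
    thus "\<exists>r L. strict_mono r \<and> (\<forall>u\<in>S. (\<lambda>j. f (r j) u) \<longlonglongrightarrow> L u)"
    proof (induction S rule: finite_induct)
      case empty thus ?case by (intro exI[of _ id]) (auto simp: strict_mono_def)
    next
      case (insert a S)
      then obtain r L where r: "strict_mono r" "\<forall>u\<in>S. (\<lambda>j. f (r j) u) \<longlonglongrightarrow> L u" by blast
      have "\<And>j. \<bar>f (r j) a\<bar> \<le> 1" using bd by (simp add: abs_le_iff)
      hence "bounded (range (\<lambda>j. f (r j) a))" by (intro boundedI[where B=1]) auto
      then obtain la s where s: "strict_mono s" "((\<lambda>j. f (r j) a) \<circ> s) \<longlonglongrightarrow> la"
        using bounded_imp_convergent_subsequence by blast
      define L' where "L' u = (if u = a then la else L u)" for u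
      have "strict_mono (r \<circ> s)" using r(1) s(1) by (simp add: strict_mono_o)
      moreover have "\<forall>u\<in>insert a S. (\<lambda>j. f ((r \<circ> s) j) u) \<longlonglongrightarrow> L' u"
      proof
        fix u assume "u \<in> insert a S"
        show "(\<lambda>j. f ((r \<circ> s) j) u) \<longlonglongrightarrow> L' u"
        proof (cases "u = a")
          case True thus ?thesis using s(2) by (simp add: L'_def o_def)
        next
          case False
          hence "u \<in> S" using \<open>u \<in> insert a S\<close> by simp
          hence "((\<lambda>j. f (r j) u) \<circ> s) \<longlonglongrightarrow> L u" using r(2) s(1) by (intro LIMSEQ_subseq_LIMSEQ) auto
          thus ?thesis using False by (simp add: L'_def o_def)
        qed
      qed
      ultimately show ?case by blast
    qed
  qed
  from this[of UNIV] show ?thesis by simp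
qed

lemma xlnx_diff_ge:
  fixes p q :: real
  assumes "0 \<le> p" "0 < q"
  shows "p - q \<le> p * ln p - p * ln q"
proof (cases "p = 0")
  case False
  hence p: "0 < p" using assms(1) by simp
  have "p * ln (q / p) \<le> p * (q / p - 1)"
    using p assms(2) by (intro mult_left_mono ln_le_minus_one) auto
  moreover have "p * ln (q / p) = p * ln q - p * ln p" using p assms(2) by (simp add: ln_div right_diff_distrib)
  moreover have "p * (q / p - 1) = q - p" using p by (simp add: field_simps)
  ultimately show ?thesis by linarith
qed (use assms in simp)

lemma xlnx_diff_eq_imp_eq:
  fixes p q :: real
  assumes "0 \<le> p" "0 < q" and eq: "p * ln p - p * ln q = p - q"
  shows "p = q"
proof -
  have p: "0 < p" using assms by (cases "p = 0") auto
  moreover have "p * ln (q / p) = p * ln q - p * ln p" using p assms(2) by (simp add: ln_div right_diff_distrib)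
  moreover have "p * (q / p - 1) = q - p" using p by (simp add: field_simps)
  ultimately have "p * ln (q / p) = p * (q / p - 1)" using eq by linarith
  hence "ln (q / p) = q / p - 1" using p by simp
  hence "q / p = 1" using p assms(2) by (intro ln_eq_minus_one) simp_all
  thus ?thesis using p by simp
qed

lemma distribution_seq_convergent_subseq:
  fixes p :: "nat \<Rightarrow> 'a::finite \<Rightarrow> real"
  assumes "\<And>n. 0 < n \<Longrightarrow> (\<forall>u. 0 \<le> p n u) \<and> (\<Sum>u\<in>UNIV. p n u) = 1"
  shows "\<exists>s L. strict_mono s \<and> (\<forall>j. 0 < s j) \<and> (\<forall>u. (\<lambda>j. p (s j) u) \<longlonglongrightarrow> L u)
           \<and> (\<forall>u. 0 \<le> L u) \<and> (\<Sum>u\<in>UNIV. L u) = 1"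
proof -
  have "0 \<le> p (Suc n) u \<and> p (Suc n) u \<le> 1" for n u
    using assms[of "Suc n"] member_le_sum[of u UNIV "p (Suc n)"] by auto
  then obtain r L where r: "strict_mono r" and conv: "\<And>u. (\<lambda>j. p (Suc (r j)) u) \<longlonglongrightarrow> L u"
    using convergent_subseq_finite[of "\<lambda>n. p (Suc n)"] by blast
  have dist: "(\<forall>u. 0 \<le> p (Suc (r j)) u) \<and> (\<Sum>u\<in>UNIV. p (Suc (r j)) u) = 1" for j
    using assms by simp
  have "0 \<le> L u" for u using dist by (intro LIMSEQ_le_const[OF conv]) auto
  moreover have "(\<lambda>j. \<Sum>u\<in>UNIV. p (Suc (r j)) u) \<longlonglongrightarrow> (\<Sum>u\<in>UNIV. L u)"
    by (intro tendsto_sum conv)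
  hence "(\<Sum>u\<in>UNIV. L u) = 1" using dist by (simp add: LIMSEQ_const_iff)
  moreover have "strict_mono (\<lambda>j. Suc (r j))" using r by (simp add: strict_mono_def)
  ultimately show ?thesis using conv by (intro exI[of _ "\<lambda>j. Suc (r j)"] exI[of _ L]) auto
qed

lemma kl_nonpos_imp_eq:
  fixes P Q :: "'a::finite \<Rightarrow> real"
  assumes P_nn: "\<And>z. 0 \<le> P z" and P_sum: "(\<Sum>z\<in>UNIV. P z) = 1"
    and Q_pos: "\<And>z. 0 < Q z" and Q_sum: "(\<Sum>z\<in>UNIV. Q z) = 1"
    and kl: "(\<Sum>z\<in>UNIV. P z * ln (P z) - P z * ln (Q z)) \<le> 0"
  shows "P = Q"
proof
  define g where "g z = (P z * ln (P z) - P z * ln (Q z)) - (P z - Q z)" for z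
  have g_nn: "\<forall>z\<in>UNIV. 0 \<le> g z" using xlnx_diff_ge[OF P_nn Q_pos] by (simp add: g_def)
  have "(\<Sum>z\<in>UNIV. g z) = (\<Sum>z\<in>UNIV. P z * ln (P z) - P z * ln (Q z))"
    by (simp add: g_def sum_subtractf P_sum Q_sum)
  hence "(\<Sum>z\<in>UNIV. g z) = 0" using kl g_nn by (smt (verit) sum_nonneg)
  hence "g z = 0" for z using g_nn sum_nonneg_eq_0_iff[of UNIV g] by simp
  thus "P z = Q z" for z using xlnx_diff_eq_imp_eq[OF P_nn Q_pos] by (simp add: g_def)
qed

lemma kl_div_eq_diff:
  assumes P_nn: "\<And>zs. 0 \<le> P zs" and Q_pos: "\<And>zs. 0 < Q zs"
  shows "kl_div n P Q * ln 2 = (\<Sum>zs\<in>lists_n n. P zs * ln (P zs)) - (\<Sum>zs\<in>lists_n n. P zs * ln (Q zs))"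
proof -
  have "(if P zs = 0 then 0 else P zs * log 2 (P zs / Q zs)) * ln 2 = P zs * ln (P zs) - P zs * ln (Q zs)" for zs
    using P_nn[of zs] Q_pos[of zs] by (auto simp: log_def ln_div right_diff_distrib)
  thus ?thesis unfolding kl_div_def by (simp add: sum_distrib_right sum_subtractf)
qed

section \<open>State sequences and the channel\<close>

lemma ps_n_snoc: "ps_n P (xs @ [x]) = ps_n P xs * P x"
proof -
  have "ps_n P (xs @ [x]) = (\<Prod>i<Suc (length xs). P ((xs @ [x]) ! i))" by (simp add: ps_n_def)
  also have "\<dots> = (\<Prod>i<length xs. P ((xs @ [x]) ! i)) * P x" by (simp add: nth_append)
  also have "(\<Prod>i<length xs. P ((xs @ [x]) ! i)) = ps_n P xs"
    unfolding ps_n_def by (intro prod.cong refl) (simp add: nth_append)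
  finally show ?thesis .
qed

lemma ps_n_Nil[simp]: "ps_n P [] = 1" by (simp add: ps_n_def)

lemma ps_n_append: "ps_n P (a @ c) = ps_n P a * ps_n P c"
  by (induction c rule: rev_induct) (simp_all add: ps_n_snoc flip: append_assoc)

lemma ps_n_Cons: "ps_n P (x # c) = P x * ps_n P c"
  using ps_n_append[of P "[x]" c] ps_n_snoc[of P "[]" x] by simp

lemma ps_n_lists: "xs \<in> lists_n n \<Longrightarrow> ps_n P xs = (\<Prod>i<n. P (xs ! i))"
  by (simp add: ps_n_def lists_n_def)

lemma length_xseq[simp]: "length (xseq e m k ss) = length ss"
  by (simp add: xseq_def)

lemma nth_xseq: "j < length ss \<Longrightarrow> xseq e m k ss ! j = e m k (take j ss @ [ss ! j])"
  by (simp add: xseq_def take_Suc_conv_app_nth)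

lemma set_size_pos: "0 < set_size n R"
  unfolding set_size_def by simp

lemma ln_set_size_ge: "real n * R * ln 2 \<le> ln (real (set_size n R))"
proof -
  have "2 powr (real n * R) \<le> real (set_size n R)"
    unfolding set_size_def by (simp add: real_nat_ceiling_ge)
  hence "ln (2 powr (real n * R)) \<le> ln (real (set_size n R))"
    using set_size_pos[of n R] by (subst ln_le_cancel_iff) auto
  thus ?thesis by (simp add: ln_powr)
qed

locale causal_channel =
  fixes PS :: "'s::finite \<Rightarrow> real"
    and W :: "'s \<Rightarrow> 'x::finite \<Rightarrow> 'y::finite \<Rightarrow> 'z::finite \<Rightarrow> real"
  assumes PS_nn: "\<And>s. 0 \<le> PS s" and PS_sum: "(\<Sum>s\<in>UNIV. PS s) = 1"
    and W_nn: "\<And>s x y z. 0 \<le> W s x y z"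
    and W_sum: "\<And>s x. (\<Sum>y\<in>UNIV. \<Sum>z\<in>UNIV. W s x y z) = 1"
begin

lemma ps_nn: "0 \<le> ps_n PS ss"
  unfolding ps_n_def by (intro prod_nonneg) (simp add: PS_nn)

lemma sum_ps: "(\<Sum>ss\<in>lists_n n. ps_n PS ss) = 1"
proof -
  have "(\<Sum>ss\<in>lists_n n. ps_n PS ss) = (\<Sum>ss\<in>lists_n n. \<Prod>i<n. PS (ss ! i))"
    by (intro sum.cong refl) (simp add: ps_n_lists)
  also have "\<dots> = 1" using sum_prod_lists_n[of "\<lambda>i. PS" n] by (simp add: PS_sum)
  finally show ?thesis .
qed

lemma ch_nn: "0 \<le> ch_n W ss xs ys zs"
  unfolding ch_n_def by (intro prod_nonneg) (simp add: W_nn)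

lemma sum_ch_at:
  assumes "ss \<in> lists_n n" "i < n"
  shows "(\<Sum>ys\<in>lists_n n. \<Sum>zs\<in>lists_n n. ch_n W ss xs ys zs * f (ys ! i) (zs ! i))
       = (\<Sum>y\<in>UNIV. \<Sum>z\<in>UNIV. W (ss ! i) (xs ! i) y z * f y z)"
proof -
  have l: "length ss = n" using assms by (simp add: lists_n_def)
  define G where "G j y z = W (ss ! j) (xs ! j) y z * (if j = i then f y z else 1)" for j y z
  have "\<And>ys zs. ch_n W ss xs ys zs * f (ys ! i) (zs ! i) = (\<Prod>j<n. G j (ys ! j) (zs ! j))"
    using assms(2) by (simp add: ch_n_def G_def l prod.distrib)
  hence "(\<Sum>ys\<in>lists_n n. \<Sum>zs\<in>lists_n n. ch_n W ss xs ys zs * f (ys ! i) (zs ! i))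
       = (\<Prod>j<n. \<Sum>y\<in>UNIV. \<Sum>z\<in>UNIV. G j y z)"
    by (simp add: sum_prod_lists_n_pairs)
  also have "\<dots> = (\<Prod>j<n. if j = i then (\<Sum>y\<in>UNIV. \<Sum>z\<in>UNIV. W (ss ! i) (xs ! i) y z * f y z) else 1)"
    by (intro prod.cong refl) (simp add: G_def W_sum)
  also have "\<dots> = (\<Sum>y\<in>UNIV. \<Sum>z\<in>UNIV. W (ss ! i) (xs ! i) y z * f y z)"
    using assms(2) by simp
  finally show ?thesis .
qed

lemma sum_ps_at:
  assumes "i < n"
  shows "(\<Sum>ss\<in>lists_n n. ps_n PS ss * H (take i ss) (ss ! i))
       = (\<Sum>a\<in>lists_n i. ps_n PS a * (\<Sum>s\<in>UNIV. PS s * H a s))"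
proof -
  obtain d where n: "n = i + Suc d" using assms by (intro that[of "n - i - 1"]) simp
  have "(\<Sum>ss\<in>lists_n n. ps_n PS ss * H (take i ss) (ss ! i))
      = (\<Sum>a\<in>lists_n i. \<Sum>c'\<in>lists_n (Suc d). ps_n PS (a @ c') * H (take i (a @ c')) ((a @ c') ! i))"
    unfolding n by (rule sum_lists_n_append)
  also have "\<dots> = (\<Sum>a\<in>lists_n i. \<Sum>s\<in>UNIV. \<Sum>c\<in>lists_n d. ps_n PS (a @ s # c) * H (take i (a @ s # c)) ((a @ s # c) ! i))"
    by (intro sum.cong refl) (rule sum_lists_n_Cons)
  also have "\<dots> = (\<Sum>a\<in>lists_n i. \<Sum>s\<in>UNIV. \<Sum>c\<in>lists_n d. ps_n PS a * (PS s * H a s) * ps_n PS c)"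
  proof (intro sum.cong refl)
    fix a :: "'s list" and s c assume "a \<in> lists_n i"
    hence l: "length a = i" by (simp add: lists_n_def)
    have "take i (a @ s # c) = a" "(a @ s # c) ! i = s" using l by auto
    thus "ps_n PS (a @ s # c) * H (take i (a @ s # c)) ((a @ s # c) ! i) = ps_n PS a * (PS s * H a s) * ps_n PS c"
      by (simp add: ps_n_append ps_n_Cons)
  qed
  also have "\<dots> = (\<Sum>a\<in>lists_n i. \<Sum>s\<in>UNIV. ps_n PS a * (PS s * H a s))"
    by (simp add: sum_distrib_left[symmetric] sum_ps)
  also have "\<dots> = (\<Sum>a\<in>lists_n i. ps_n PS a * (\<Sum>s\<in>UNIV. PS s * H a s))"
    by (simp add: sum_distrib_left)
  finally show ?thesis .
qed

lemma sum_channel_marginal_at: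
  assumes "i < n"
  shows "(\<Sum>ss\<in>lists_n n. \<Sum>ys\<in>lists_n n. \<Sum>zs\<in>lists_n n.
            ps_n PS ss * ch_n W ss (xseq e m k ss) ys zs * f (take i ss) (ss ! i) (ys ! i) (zs ! i))
       = (\<Sum>a\<in>lists_n i. ps_n PS a * (\<Sum>s\<in>UNIV. \<Sum>y\<in>UNIV. \<Sum>z\<in>UNIV. PS s * W s (e m k (a @ [s])) y z * f a s y z))"
proof -
  have "(\<Sum>ss\<in>lists_n n. \<Sum>ys\<in>lists_n n. \<Sum>zs\<in>lists_n n.
            ps_n PS ss * ch_n W ss (xseq e m k ss) ys zs * f (take i ss) (ss ! i) (ys ! i) (zs ! i))
      = (\<Sum>ss\<in>lists_n n. ps_n PS ss * (\<Sum>ys\<in>lists_n n. \<Sum>zs\<in>lists_n n.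
            ch_n W ss (xseq e m k ss) ys zs * f (take i ss) (ss ! i) (ys ! i) (zs ! i)))"
    by (simp add: sum_distrib_left mult.assoc)
  also have "\<dots> = (\<Sum>ss\<in>lists_n n. ps_n PS ss * (\<Sum>y\<in>UNIV. \<Sum>z\<in>UNIV.
            W (ss ! i) (e m k (take i ss @ [ss ! i])) y z * f (take i ss) (ss ! i) y z))"
  proof (intro sum.cong refl arg_cong2[where f="(*)"])
    fix ss :: "'s list" assume ss: "ss \<in> lists_n n"
    hence "i < length ss" using assms by (simp add: lists_n_def)
    thus "(\<Sum>ys\<in>lists_n n. \<Sum>zs\<in>lists_n n. ch_n W ss (xseq e m k ss) ys zs * f (take i ss) (ss ! i) (ys ! i) (zs ! i))
        = (\<Sum>y\<in>UNIV. \<Sum>z\<in>UNIV. W (ss ! i) (e m k (take i ss @ [ss ! i])) y z * f (take i ss) (ss ! i) y z)"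
      using sum_ch_at[OF ss assms, of "xseq e m k ss" "\<lambda>y z. f (take i ss) (ss ! i) y z"]
      by (simp add: nth_xseq)
  qed
  also have "\<dots> = (\<Sum>a\<in>lists_n i. ps_n PS a * (\<Sum>s\<in>UNIV. PS s * (\<Sum>y\<in>UNIV. \<Sum>z\<in>UNIV.
            W s (e m k (a @ [s])) y z * f a s y z)))"
    by (rule sum_ps_at[OF assms, where H="\<lambda>a s. \<Sum>y\<in>UNIV. \<Sum>z\<in>UNIV. W s (e m k (a @ [s])) y z * f a s y z"])
  also have "\<dots> = (\<Sum>a\<in>lists_n i. ps_n PS a * (\<Sum>s\<in>UNIV. \<Sum>y\<in>UNIV. \<Sum>z\<in>UNIV. PS s * W s (e m k (a @ [s])) y z * f a s y z))"
    by (simp add: sum_distrib_left mult.assoc)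
  finally show ?thesis .
qed

subsection \<open>Single-letter quantities of a distribution of Shannon strategies\<close>

text \<open>A Shannon strategy u :: 's \<Rightarrow> 'x plays the role of the auxiliary V with x = x(v, s).
  outY u and outZ u are the output laws when u is used; mixY p and mixZ p are those of the
  mixture with weights p, info p is I(U;Y) in nats for U of law p, and post_state u s y is the
  posterior of the state given Y = y (0 where outY u y = 0).\<close>

definition chY :: "'s \<Rightarrow> 'x \<Rightarrow> 'y \<Rightarrow> real" where
  "chY s x y = (\<Sum>z\<in>UNIV. W s x y z)"

definition outY :: "('s \<Rightarrow> 'x) \<Rightarrow> 'y \<Rightarrow> real" where
  "outY u y = (\<Sum>s\<in>UNIV. PS s * chY s (u s) y)"

definition outZ :: "('s \<Rightarrow> 'x) \<Rightarrow> 'z \<Rightarrow> real" where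
  "outZ u z = (\<Sum>s\<in>UNIV. PS s * (\<Sum>y\<in>UNIV. W s (u s) y z))"

definition post_state :: "('s \<Rightarrow> 'x) \<Rightarrow> 's \<Rightarrow> 'y \<Rightarrow> real" where
  "post_state u s y = PS s * chY s (u s) y / outY u y"

definition mixY :: "(('s \<Rightarrow> 'x) \<Rightarrow> real) \<Rightarrow> 'y \<Rightarrow> real" where
  "mixY p y = (\<Sum>u\<in>UNIV. p u * outY u y)"

definition mixZ :: "(('s \<Rightarrow> 'x) \<Rightarrow> real) \<Rightarrow> 'z \<Rightarrow> real" where
  "mixZ p z = (\<Sum>u\<in>UNIV. p u * outZ u z)"


definition rel_ent :: "('z \<Rightarrow> real) \<Rightarrow> ('z \<Rightarrow> real) \<Rightarrow> real" where
  "rel_ent P Q = (\<Sum>z\<in>UNIV. P z * ln (P z) - P z * ln (Q z))"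

definition mix_cost :: "('x \<Rightarrow> real) \<Rightarrow> (('s \<Rightarrow> 'x) \<Rightarrow> real) \<Rightarrow> real" where
  "mix_cost b p = (\<Sum>u\<in>UNIV. p u * (\<Sum>s\<in>UNIV. PS s * b (u s)))"

definition negHY :: "('s \<Rightarrow> 'x) \<Rightarrow> real" where
  "negHY u = (\<Sum>y\<in>UNIV. outY u y * ln (outY u y))"

definition info :: "(('s \<Rightarrow> 'x) \<Rightarrow> real) \<Rightarrow> real" where
  "info p = (\<Sum>u\<in>UNIV. p u * negHY u) - (\<Sum>y\<in>UNIV. mixY p y * ln (mixY p y))"

lemma chY_nn: "0 \<le> chY s x y" unfolding chY_def by (intro sum_nonneg) (simp add: W_nn)

lemma outY_nn: "0 \<le> outY u y" unfolding outY_def by (intro sum_nonneg mult_nonneg_nonneg PS_nn chY_nn)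

lemma outZ_nn: "0 \<le> outZ u z" unfolding outZ_def by (intro sum_nonneg mult_nonneg_nonneg PS_nn W_nn)

lemma post_state_nn: "0 \<le> post_state u s y" unfolding post_state_def by (intro divide_nonneg_nonneg mult_nonneg_nonneg PS_nn chY_nn outY_nn)

lemma outY_sum: "(\<Sum>y\<in>UNIV. outY u y) = 1"
proof -
  have "(\<Sum>y\<in>UNIV. outY u y) = (\<Sum>s\<in>UNIV. PS s * (\<Sum>y\<in>UNIV. chY s (u s) y))"
    unfolding outY_def by (subst sum.swap) (simp add: sum_distrib_left)
  also have "\<dots> = 1" by (simp add: chY_def W_sum PS_sum)
  finally show ?thesis .
qed

lemma outZ_sum: "(\<Sum>z\<in>UNIV. outZ u z) = 1"
proof -
  have "(\<Sum>z\<in>UNIV. outZ u z) = (\<Sum>s\<in>UNIV. PS s * (\<Sum>z\<in>UNIV. \<Sum>y\<in>UNIV. W s (u s) y z))"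
    unfolding outZ_def by (subst sum.swap) (simp add: sum_distrib_left)
  also have "\<dots> = 1" by (subst sum.swap) (simp add: W_sum PS_sum)
  finally show ?thesis .
qed

lemma sum_post_state_le_1: "(\<Sum>s\<in>UNIV. post_state u s y) \<le> 1"
proof -
  have "(\<Sum>s\<in>UNIV. post_state u s y) = outY u y / outY u y"
    unfolding post_state_def by (simp add: sum_divide_distrib[symmetric] outY_def)
  also have "\<dots> \<le> 1" by (cases "outY u y = 0") auto
  finally show ?thesis .
qed

lemma sum_prod_post_state_le_1:
  "(\<Sum>ss\<in>lists_n n. \<Prod>j<n. post_state (\<lambda>s. g (take j ss @ [s])) (ss ! j) (ys ! j)) \<le> 1"
proof (induction n)
  case 0 thus ?case by simp
next
  case (Suc n)
  have "(\<Sum>ss\<in>lists_n (Suc n). \<Prod>j<Suc n. post_state (\<lambda>s. g (take j ss @ [s])) (ss ! j) (ys ! j))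
      = (\<Sum>ss\<in>lists_n n. \<Sum>x\<in>UNIV. \<Prod>j<Suc n. post_state (\<lambda>s. g (take j (ss @ [x]) @ [s])) ((ss @ [x]) ! j) (ys ! j))"
    by (rule sum_lists_n_snoc)
  also have "\<dots> = (\<Sum>ss\<in>lists_n n. (\<Prod>j<n. post_state (\<lambda>s. g (take j ss @ [s])) (ss ! j) (ys ! j))
                     * (\<Sum>x\<in>UNIV. post_state (\<lambda>s. g (ss @ [s])) x (ys ! n)))"
  proof (intro sum.cong refl)
    fix ss :: "'s list" assume "ss \<in> lists_n n"
    hence l: "length ss = n" by (simp add: lists_n_def)
    have "\<And>x. (\<Prod>j<n. post_state (\<lambda>s. g (take j (ss @ [x]) @ [s])) ((ss @ [x]) ! j) (ys ! j))
           = (\<Prod>j<n. post_state (\<lambda>s. g (take j ss @ [s])) (ss ! j) (ys ! j))"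
      by (intro prod.cong refl) (simp add: l nth_append)
    thus "(\<Sum>x\<in>UNIV. \<Prod>j<Suc n. post_state (\<lambda>s. g (take j (ss @ [x]) @ [s])) ((ss @ [x]) ! j) (ys ! j))
        = (\<Prod>j<n. post_state (\<lambda>s. g (take j ss @ [s])) (ss ! j) (ys ! j)) * (\<Sum>x\<in>UNIV. post_state (\<lambda>s. g (ss @ [s])) x (ys ! n))"
      by (simp add: l sum_distrib_left nth_append)
  qed
  also have "\<dots> \<le> (\<Sum>ss\<in>lists_n n. (\<Prod>j<n. post_state (\<lambda>s. g (take j ss @ [s])) (ss ! j) (ys ! j)))"
    by (intro sum_mono mult_left_le prod_nonneg sum_post_state_le_1 post_state_nn)
  also have "\<dots> \<le> 1" by (rule Suc.IH)
  finally show ?case .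
qed

lemma sum_channel_const: "(\<Sum>s\<in>UNIV. \<Sum>y\<in>UNIV. \<Sum>z\<in>UNIV. PS s * W s (u s) y z * h s) = (\<Sum>s\<in>UNIV. PS s * h s)"
proof -
  have "\<And>s. (\<Sum>y\<in>UNIV. \<Sum>z\<in>UNIV. PS s * W s (u s) y z * h s) = PS s * h s * (\<Sum>y\<in>UNIV. \<Sum>z\<in>UNIV. W s (u s) y z)"
    by (simp add: sum_distrib_left sum_distrib_right mult_ac)
  thus ?thesis by (simp add: W_sum)
qed

lemma mixY_sum: "(\<Sum>u\<in>UNIV. p u) = 1 \<Longrightarrow> (\<Sum>y\<in>UNIV. mixY p y) = 1"
  unfolding mixY_def by (subst sum.swap) (simp add: sum_distrib_left[symmetric] outY_sum)

lemma sum_outY: "(\<Sum>s\<in>UNIV. \<Sum>y\<in>UNIV. \<Sum>z\<in>UNIV. PS s * W s (u s) y z * h y) = (\<Sum>y\<in>UNIV. outY u y * h y)"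
proof -
  have "(\<Sum>s\<in>UNIV. \<Sum>y\<in>UNIV. \<Sum>z\<in>UNIV. PS s * W s (u s) y z * h y) = (\<Sum>s\<in>UNIV. \<Sum>y\<in>UNIV. PS s * chY s (u s) y * h y)"
    by (simp add: chY_def sum_distrib_left sum_distrib_right mult_ac)
  also have "\<dots> = (\<Sum>y\<in>UNIV. outY u y * h y)"
    by (subst sum.swap) (simp add: outY_def sum_distrib_right)
  finally show ?thesis .
qed

lemma outY_eq_indicator: "outY u y = (\<Sum>s\<in>UNIV. \<Sum>y'\<in>UNIV. \<Sum>z\<in>UNIV. PS s * W s (u s) y' z * (if y' = y then 1 else 0))"
proof -
  have "(\<Sum>y'\<in>UNIV. outY u y' * (if y' = y then 1 else 0)) = (\<Sum>y'\<in>UNIV. if y' = y then outY u y else 0)"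
    by (rule sum.cong) auto
  thus ?thesis by (simp add: sum_outY)
qed

lemma outY_pos: "0 < PS s \<Longrightarrow> 0 < W s (u s) y z \<Longrightarrow> 0 < outY u y"
proof -
  assume a: "0 < PS s" "0 < W s (u s) y z"
  have "W s (u s) y z \<le> chY s (u s) y" unfolding chY_def
    by (rule member_le_sum) (auto simp: W_nn)
  hence "0 < PS s * chY s (u s) y" using a by (intro mult_pos_pos) auto
  also have "PS s * chY s (u s) y \<le> outY u y" unfolding outY_def
    by (rule member_le_sum[of s UNIV "\<lambda>s. PS s * chY s (u s) y"]) (auto intro: mult_nonneg_nonneg PS_nn chY_nn)
  finally show ?thesis .
qed

lemma sum_outZ: "(\<Sum>s\<in>UNIV. \<Sum>y\<in>UNIV. \<Sum>z\<in>UNIV. PS s * W s (u s) y z * h z) = (\<Sum>z\<in>UNIV. outZ u z * h z)"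
proof -
  have "(\<Sum>s\<in>UNIV. \<Sum>y\<in>UNIV. \<Sum>z\<in>UNIV. PS s * W s (u s) y z * h z) = (\<Sum>s\<in>UNIV. \<Sum>z\<in>UNIV. \<Sum>y\<in>UNIV. PS s * W s (u s) y z * h z)"
    by (intro sum.cong refl) (rule sum.swap)
  also have "\<dots> = (\<Sum>z\<in>UNIV. \<Sum>s\<in>UNIV. \<Sum>y\<in>UNIV. PS s * W s (u s) y z * h z)" by (rule sum.swap)
  also have "\<dots> = (\<Sum>z\<in>UNIV. outZ u z * h z)"
    by (simp add: outZ_def sum_distrib_left sum_distrib_right mult_ac)
  finally show ?thesis .
qed

lemma mixZ_sum: "(\<Sum>u\<in>UNIV. p u) = 1 \<Longrightarrow> (\<Sum>z\<in>UNIV. mixZ p z) = 1"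
  unfolding mixZ_def by (subst sum.swap) (simp add: sum_distrib_left[symmetric] outZ_sum)

lemma mixZ_nn: "(\<And>u. 0 \<le> p u) \<Longrightarrow> 0 \<le> mixZ p z"
  unfolding mixZ_def by (intro sum_nonneg mult_nonneg_nonneg outZ_nn) auto

lemma Q0_eq_outZ: "Q0 PS W x0 = outZ (\<lambda>_. x0)"
  by (simp add: fun_eq_iff Q0_def outZ_def)

lemma mixY_tendsto: "(\<And>u. (\<lambda>j. P j u) \<longlonglongrightarrow> L u) \<Longrightarrow> (\<lambda>j. mixY (P j) y) \<longlonglongrightarrow> mixY L y"
  unfolding mixY_def by (intro tendsto_intros) auto

lemma mixZ_tendsto: "(\<And>u. (\<lambda>j. P j u) \<longlonglongrightarrow> L u) \<Longrightarrow> (\<lambda>j. mixZ (P j) z) \<longlonglongrightarrow> mixZ L z"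
  unfolding mixZ_def by (intro tendsto_intros) auto

lemma info_tendsto: "(\<And>u. (\<lambda>j. P j u) \<longlonglongrightarrow> L u) \<Longrightarrow> (\<lambda>j. info (P j)) \<longlonglongrightarrow> info L"
  unfolding info_def negHY_def by (intro tendsto_intros tendsto_xlnx mixY_tendsto) auto

lemma rel_ent_tendsto: "(\<And>u. (\<lambda>j. P j u) \<longlonglongrightarrow> L u) \<Longrightarrow> (\<lambda>j. rel_ent (mixZ (P j)) Q) \<longlonglongrightarrow> rel_ent (mixZ L) Q"
  unfolding rel_ent_def by (intro tendsto_intros tendsto_xlnx mixZ_tendsto) auto

lemma mix_cost_tendsto: "(\<And>u. (\<lambda>j. P j u) \<longlonglongrightarrow> L u) \<Longrightarrow> (\<lambda>j. mix_cost b (P j)) \<longlonglongrightarrow> mix_cost b L"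
  unfolding mix_cost_def by (intro tendsto_intros) auto

subsection \<open>Reduction of the support\<close>

definition preserves :: "('x \<Rightarrow> real) \<Rightarrow> (('s \<Rightarrow> 'x) \<Rightarrow> real) \<Rightarrow> bool" where
  "preserves b d \<longleftrightarrow> (\<Sum>u\<in>UNIV. d u) = 0 \<and> (\<forall>y. (\<Sum>u\<in>UNIV. d u * outY u y) = 0)
     \<and> (\<forall>z. (\<Sum>u\<in>UNIV. d u * outZ u z) = 0) \<and> (\<Sum>u\<in>UNIV. d u * (\<Sum>s\<in>UNIV. PS s * b (u s))) = 0"

definition improves :: "('x \<Rightarrow> real) \<Rightarrow> (('s \<Rightarrow> 'x) \<Rightarrow> real) \<Rightarrow> (('s \<Rightarrow> 'x) \<Rightarrow> real) \<Rightarrow> bool" where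
  "improves b p p' \<longleftrightarrow> (\<forall>u. 0 \<le> p' u) \<and> (\<Sum>u\<in>UNIV. p' u) = (\<Sum>u\<in>UNIV. p u)
     \<and> mixZ p' = mixZ p \<and> mix_cost b p' = mix_cost b p \<and> info p \<le> info p'"

lemma improves_refl: "(\<And>u. 0 \<le> p u) \<Longrightarrow> improves b p p"
  by (simp add: improves_def)

lemma improves_trans: "improves b p p' \<Longrightarrow> improves b p' p'' \<Longrightarrow> improves b p p''"
  by (auto simp: improves_def)

text \<open>Along a direction that preserves the law of Y the output entropy is constant, so
  info is affine there.\<close>
lemma improves_along_preserving:
  assumes pres: "preserves b d" and nn: "\<And>u. 0 \<le> p u + t * d u"
    and slope: "0 \<le> t * (\<Sum>u\<in>UNIV. d u * negHY u)"
  shows "improves b p (\<lambda>u. p u + t * d u)"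
proof -
  have lin: "(\<Sum>u\<in>UNIV. (p u + t * d u) * g u) = (\<Sum>u\<in>UNIV. p u * g u) + t * (\<Sum>u\<in>UNIV. d u * g u)" for g
    by (simp add: distrib_right sum.distrib sum_distrib_left mult.assoc)
  have mixY_eq: "mixY (\<lambda>u. p u + t * d u) = mixY p"
    using pres by (auto simp: mixY_def lin preserves_def)
  show ?thesis unfolding improves_def
  proof (intro conjI allI)
    show "0 \<le> p u + t * d u" for u by (rule nn)
    show "(\<Sum>u\<in>UNIV. p u + t * d u) = (\<Sum>u\<in>UNIV. p u)"
      using lin[of "\<lambda>_. 1"] pres by (simp add: preserves_def)
    show "mixZ (\<lambda>u. p u + t * d u) = mixZ p"
      using pres by (simp add: fun_eq_iff mixZ_def lin preserves_def)
    show "mix_cost b (\<lambda>u. p u + t * d u) = mix_cost b p"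
      using pres by (simp add: mix_cost_def lin preserves_def)
    show "info p \<le> info (\<lambda>u. p u + t * d u)"
      using slope by (simp add: info_def mixY_eq lin)
  qed
qed

lemma support_reduction_step:
  assumes p_nn: "\<And>u. 0 \<le> p u" and d_supp: "\<And>u. p u = 0 \<Longrightarrow> d u = 0" and d_nz: "d u0 \<noteq> 0"
    and pres: "preserves b d"
  shows "\<exists>p'. improves b p p' \<and> card (support p') < card (support p)"
proof -
  obtain d' where d': "\<And>u. p u = 0 \<Longrightarrow> d' u = 0" "d' u0 \<noteq> 0" "preserves b d'"
      "0 \<le> (\<Sum>u\<in>UNIV. d' u * negHY u)"
  proof (cases "0 \<le> (\<Sum>u\<in>UNIV. d u * negHY u)")
    case True thus ?thesis using that d_supp d_nz pres by blast
  next
    case False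
    show ?thesis
      by (rule that[of "\<lambda>u. - d u"]) (use False d_supp d_nz pres in \<open>auto simp: preserves_def sum_negf\<close>)
  qed
  obtain t where "0 < t" "\<And>u. 0 \<le> p u + t * d' u"
      "card (support (\<lambda>u. p u + t * d' u)) < card (support p)"
    using exists_step_to_boundary[of p d' u0, OF p_nn d'(1) _ d'(2)] d'(3) by (auto simp: preserves_def)
  thus ?thesis using improves_along_preserving[OF d'(3)] d'(4) by (meson mult_nonneg_nonneg less_imp_le)
qed

lemma sum_eval_at_state: "(\<Sum>u\<in>UNIV. d u * phi s (u s)) = (\<Sum>x\<in>UNIV. phi s x * (\<Sum>u\<in>UNIV. d u * (if u s = x then 1 else 0)))"
  for phi :: "'s \<Rightarrow> 'x \<Rightarrow> real" and d :: "('s \<Rightarrow> 'x) \<Rightarrow> real"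
proof -
  have "(\<Sum>u\<in>UNIV. d u * phi s (u s)) = (\<Sum>u\<in>UNIV. \<Sum>x\<in>UNIV. d u * (phi s x * (if u s = x then 1 else 0)))"
    by (intro sum.cong refl) (simp add: if_distrib cong: if_cong)
  also have "\<dots> = (\<Sum>x\<in>UNIV. phi s x * (\<Sum>u\<in>UNIV. d u * (if u s = x then 1 else 0)))"
    by (subst sum.swap) (simp add: sum_distrib_left mult_ac)
  finally show ?thesis .
qed

lemma preservesI_inputs:
  assumes s0: "(\<Sum>u\<in>UNIV. d u) = 0"
    and sx: "\<And>s x. x \<noteq> x1 \<Longrightarrow> (\<Sum>u\<in>UNIV. d u * (if u s = x then 1 else 0)) = 0"
  shows "preserves b d"
proof -
  have all: "(\<Sum>u\<in>UNIV. d u * (if u s = x then 1 else 0)) = 0" for s x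
  proof (cases "x = x1")
    case False thus ?thesis by (rule sx)
  next
    case True
    have "(\<Sum>u\<in>UNIV. d u * (\<lambda>s x. 1) s (u s)) = (\<Sum>x\<in>UNIV. (\<Sum>u\<in>UNIV. d u * (if u s = x then 1 else 0)))"
      using sum_eval_at_state[of d "\<lambda>s x. 1" s] by simp
    also have "\<dots> = (\<Sum>u\<in>UNIV. d u * (if u s = x1 then 1 else 0)) + (\<Sum>x\<in>UNIV - {x1}. (\<Sum>u\<in>UNIV. d u * (if u s = x then 1 else 0)))"
      by (rule sum.remove) auto
    also have "(\<Sum>x\<in>UNIV - {x1}. (\<Sum>u\<in>UNIV. d u * (if u s = x then 1 else 0))) = 0"
      by (rule sum.neutral) (simp add: sx)
    finally show ?thesis using s0 True by simp
  qed
  have phi0: "(\<Sum>u\<in>UNIV. d u * (\<Sum>s\<in>UNIV. phi s (u s))) = 0" for phi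
  proof -
    have "(\<Sum>u\<in>UNIV. d u * (\<Sum>s\<in>UNIV. phi s (u s))) = (\<Sum>s\<in>UNIV. \<Sum>u\<in>UNIV. d u * phi s (u s))"
      by (simp add: sum_distrib_left) (rule sum.swap)
    also have "\<dots> = 0" by (simp add: sum_eval_at_state all)
    finally show ?thesis .
  qed
  show ?thesis unfolding preserves_def
  proof (intro conjI allI)
    show "(\<Sum>u\<in>UNIV. d u) = 0" by (rule s0)
    fix y show "(\<Sum>u\<in>UNIV. d u * outY u y) = 0"
      using phi0[of "\<lambda>s x. PS s * chY s x y"] by (simp add: outY_def)
  next
    fix z show "(\<Sum>u\<in>UNIV. d u * outZ u z) = 0"
      using phi0[of "\<lambda>s x. PS s * (\<Sum>y\<in>UNIV. W s x y z)"] by (simp add: outZ_def)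
  next
    show "(\<Sum>u\<in>UNIV. d u * (\<Sum>s\<in>UNIV. PS s * b (u s))) = 0"
      using phi0[of "\<lambda>s x. PS s * b x"] by simp
  qed
qed

lemma preservesI_outputs:
  assumes ty: "\<And>y. (\<Sum>u\<in>UNIV. d u * outY u y) = 0"
    and tz: "\<And>z. z \<noteq> z0 \<Longrightarrow> (\<Sum>u\<in>UNIV. d u * outZ u z) = 0"
    and co: "(\<Sum>u\<in>UNIV. d u * (\<Sum>s\<in>UNIV. PS s * b (u s))) = 0"
  shows "preserves b d"
proof -
  have s0: "(\<Sum>u\<in>UNIV. d u) = 0"
  proof -
    have "(\<Sum>u\<in>UNIV. d u) = (\<Sum>u\<in>UNIV. d u * (\<Sum>y\<in>UNIV. outY u y))" by (simp add: outY_sum)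
    also have "\<dots> = (\<Sum>y\<in>UNIV. \<Sum>u\<in>UNIV. d u * outY u y)" by (simp add: sum_distrib_left) (rule sum.swap)
    also have "\<dots> = 0" by (simp add: ty)
    finally show ?thesis .
  qed
  have tzall: "(\<Sum>u\<in>UNIV. d u * outZ u z) = 0" for z
  proof (cases "z = z0")
    case False thus ?thesis by (rule tz)
  next
    case True
    have "0 = (\<Sum>u\<in>UNIV. d u * (\<Sum>z\<in>UNIV. outZ u z))" using s0 by (simp add: outZ_sum)
    also have "\<dots> = (\<Sum>z\<in>UNIV. \<Sum>u\<in>UNIV. d u * outZ u z)" by (simp add: sum_distrib_left) (rule sum.swap)
    also have "\<dots> = (\<Sum>u\<in>UNIV. d u * outZ u z0) + (\<Sum>z\<in>UNIV - {z0}. \<Sum>u\<in>UNIV. d u * outZ u z)"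
      by (rule sum.remove) auto
    also have "(\<Sum>z\<in>UNIV - {z0}. \<Sum>u\<in>UNIV. d u * outZ u z) = 0"
      by (rule sum.neutral) (simp add: tz)
    finally show ?thesis using True by simp
  qed
  show ?thesis unfolding preserves_def using s0 ty tzall co by blast
qed

text \<open>Counting the constraints P_Y, P_Z (one value of which is redundant) and the cost.\<close>
lemma exists_preserving_direction_outputs:
  assumes "CARD('y) + CARD('z) < card (support p)"
  shows "\<exists>d u0. (\<forall>u. p u = 0 \<longrightarrow> d u = 0) \<and> d u0 \<noteq> 0 \<and> preserves b d"
proof -
  obtain z0 :: 'z where True by simp
  define c where "c j u = (case j of Inl y \<Rightarrow> outY u y | Inr None \<Rightarrow> (\<Sum>s\<in>UNIV. PS s * b (u s))
      | Inr (Some z) \<Rightarrow> outZ u z)" for j u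
  have "card (UNIV - {Inr (Some z0)} :: ('y + 'z option) set) < card (support p)"
    using assms by (simp add: card_Diff_singleton)
  then obtain d where d: "\<forall>u. p u = 0 \<longrightarrow> d u = 0" "\<exists>u. d u \<noteq> 0"
      and orth: "\<forall>j\<in>UNIV - {Inr (Some z0)}. (\<Sum>u\<in>UNIV. d u * c j u) = 0"
    using exists_nonzero_orthogonal_on_support[OF finite, of _ p c] by blast
  have "preserves b d"
  proof (rule preservesI_outputs)
    show "(\<Sum>u\<in>UNIV. d u * outY u y) = 0" for y using orth[rule_format, of "Inl y"] by (simp add: c_def)
    show "(\<Sum>u\<in>UNIV. d u * outZ u z) = 0" if "z \<noteq> z0" for z
      using orth[rule_format, of "Inr (Some z)"] that by (simp add: c_def)
    show "(\<Sum>u\<in>UNIV. d u * (\<Sum>s\<in>UNIV. PS s * b (u s))) = 0"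
      using orth[rule_format, of "Inr None"] by (simp add: c_def)
  qed
  thus ?thesis using d by blast
qed

text \<open>Counting the constraints given by the total mass and the marginals P(U(s) = x), x \<noteq> x1.\<close>
lemma exists_preserving_direction_inputs:
  assumes "(CARD('x) - 1) * CARD('s) + 1 < card (support p)"
  shows "\<exists>d u0. (\<forall>u. p u = 0 \<longrightarrow> d u = 0) \<and> d u0 \<noteq> 0 \<and> preserves b d"
proof -
  obtain x1 :: 'x where True by simp
  define c where "c j u = (case j of None \<Rightarrow> 1 | Some (s, x) \<Rightarrow> if u s = x then 1 else (0::real))"
    for j and u :: "'s \<Rightarrow> 'x"
  have "0 < CARD('x)" by simp
  then obtain X where X: "CARD('x) = Suc X" using gr0_implies_Suc by blast
  have "card (Some ` (UNIV \<times> {x1}) :: ('s \<times> 'x) option set) = CARD('s)"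
    by (simp add: card_image card_cartesian_product)
  hence "card (UNIV - Some ` (UNIV \<times> {x1}) :: ('s \<times> 'x) option set) = CARD(('s \<times> 'x) option) - CARD('s)"
    using card_Diff_subset[of "Some ` (UNIV \<times> {x1}) :: ('s \<times> 'x) option set" UNIV] by simp
  also have "\<dots> = (CARD('x) - 1) * CARD('s) + 1" by (simp add: X mult.commute)
  finally have "card (UNIV - Some ` (UNIV \<times> {x1}) :: ('s \<times> 'x) option set) < card (support p)" using assms by linarith
  then obtain d where d: "\<forall>u. p u = 0 \<longrightarrow> d u = 0" "\<exists>u. d u \<noteq> 0"
      and orth: "\<forall>j\<in>UNIV - Some ` (UNIV \<times> {x1}). (\<Sum>u\<in>UNIV. d u * c j u) = 0"
    using exists_nonzero_orthogonal_on_support[OF finite, of _ p c] by blast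
  have "preserves b d"
  proof (rule preservesI_inputs)
    show "(\<Sum>u\<in>UNIV. d u) = 0" using orth[rule_format, of None] by (simp add: c_def)
    show "(\<Sum>u\<in>UNIV. d u * (if u s = x then 1 else 0)) = 0" if "x \<noteq> x1" for s x
      using orth[rule_format, of "Some (s, x)"] that by (auto simp: c_def)
  qed
  thus ?thesis using d by blast
qed

lemma exists_preserving_direction:
  assumes "\<not> card (support p) \<le> min (CARD('x) + CARD('y) + CARD('z) - 2) ((CARD('x) - 1) * CARD('s) + 1)"
  shows "\<exists>d u0. (\<forall>u. p u = 0 \<longrightarrow> d u = 0) \<and> d u0 \<noteq> 0 \<and> preserves b d"
proof (cases "(CARD('x) - 1) * CARD('s) + 1 < card (support p)")
  case True thus ?thesis by (rule exists_preserving_direction_inputs)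
next
  case False
  have "CARD('x) \<noteq> 1"
  proof
    assume "CARD('x) = 1"
    moreover obtain Y Z where "CARD('y) = Suc Y" "CARD('z) = Suc Z"
      using gr0_implies_Suc[of "CARD('y)"] gr0_implies_Suc[of "CARD('z)"] by auto
    ultimately show False using assms False by (simp add: min_def split: if_splits)
  qed
  moreover have "0 < CARD('x)" by simp
  ultimately have "2 \<le> CARD('x)" by presburger
  hence "CARD('y) + CARD('z) < card (support p)" using assms False by simp
  thus ?thesis by (rule exists_preserving_direction_outputs)
qed

lemma support_reduction:
  assumes "\<And>u. 0 \<le> p u"
  shows "\<exists>p'. improves b p p'
    \<and> card (support p') \<le> min (CARD('x) + CARD('y) + CARD('z) - 2) ((CARD('x) - 1) * CARD('s) + 1)"
  using assms
proof (induction "card (support p)" arbitrary: p rule: less_induct)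
  case less
  show ?case
  proof (cases "card (support p) \<le> min (CARD('x) + CARD('y) + CARD('z) - 2) ((CARD('x) - 1) * CARD('s) + 1)")
    case True thus ?thesis using improves_refl[of p b, OF less.prems] by blast
  next
    case False
    then obtain d u0 where d: "\<forall>u. p u = 0 \<longrightarrow> d u = 0" "d u0 \<noteq> 0" "preserves b d"
      using exists_preserving_direction[of p b] by blast
    then obtain p' where p': "improves b p p'" "card (support p') < card (support p)"
      using support_reduction_step[of p d u0 b, OF less.prems] by blast
    moreover have "\<And>u. 0 \<le> p' u" using p'(1) by (simp add: improves_def)
    ultimately obtain p'' where "improves b p' p''"
        "card (support p'') \<le> min (CARD('x) + CARD('y) + CARD('z) - 2) ((CARD('x) - 1) * CARD('s) + 1)"
      using less.hyps[of p'] by blast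
    thus ?thesis using improves_trans[OF p'(1)] by blast
  qed
qed

lemma joint_VY_eq: "joint_VY PS W PV xf v y = PV v * outY (xf v) y"
  unfolding joint_VY_def outY_def chY_def by (simp add: sum_distrib_left mult_ac)

lemma mutual_info_eq_info:
  assumes h: "bij_betw h {..<k} (support p)" and nn: "\<And>u. 0 \<le> p u"
  shows "mutual_info (joint_VY PS W (\<lambda>v. p (h v)) h) {..<k} UNIV = info p / ln 2"
proof -
  define PV where "PV v = p (h v)" for v
  have marg_V: "(\<Sum>y'\<in>UNIV. joint_VY PS W PV h v y') = PV v" for v
    by (simp add: joint_VY_eq sum_distrib_left[symmetric] outY_sum)
  have marg_Y: "(\<Sum>v'\<in>{..<k}. joint_VY PS W PV h v' y) = mixY p y" for y
    using sum_support_reindex[OF h, of "\<lambda>u. outY u y"] by (simp add: joint_VY_eq PV_def mixY_def)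
  have le_mixY: "PV v * outY (h v) y \<le> mixY p y" for v y
    unfolding mixY_def PV_def
    by (rule member_le_sum[of "h v" UNIV "\<lambda>u. p u * outY u y"]) (auto intro: mult_nonneg_nonneg nn outY_nn)
  have "mutual_info (joint_VY PS W PV h) {..<k} UNIV
      = (\<Sum>v<k. \<Sum>y\<in>UNIV. (PV v * outY (h v) y * ln (outY (h v) y) - PV v * outY (h v) y * ln (mixY p y)) / ln 2)"
    unfolding mutual_info_def marg_V marg_Y unfolding joint_VY_eq
    by (intro sum.cong refl mutual_info_summand_eq) (auto simp: PV_def nn outY_nn le_mixY[unfolded PV_def])
  also have "\<dots> = ((\<Sum>v<k. PV v * negHY (h v)) - (\<Sum>y\<in>UNIV. (\<Sum>v<k. PV v * outY (h v) y) * ln (mixY p y))) / ln 2"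
  proof -
    have "(\<Sum>v<k. \<Sum>y\<in>UNIV. PV v * outY (h v) y * ln (mixY p y))
        = (\<Sum>y\<in>UNIV. (\<Sum>v<k. PV v * outY (h v) y) * ln (mixY p y))"
      by (subst sum.swap) (simp add: sum_distrib_right)
    thus ?thesis
      by (simp add: sum_divide_distrib[symmetric] sum_subtractf negHY_def sum_distrib_left mult.assoc)
  qed
  also have "\<dots> = info p / ln 2"
    using sum_support_reindex[OF h, of negHY] marg_Y by (simp add: PV_def info_def joint_VY_eq)
  finally show ?thesis unfolding PV_def .
qed

lemma small_support_info_le_causal_bound:
  assumes nn: "\<And>u. 0 \<le> p u" and sum1: "(\<Sum>u\<in>UNIV. p u) = 1" and mixZ: "mixZ p = Q0 PS W x0"
    and cost: "mix_cost b p \<le> B"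
    and card: "card (support p) \<le> min (CARD('x) + CARD('y) + CARD('z) - 2) ((CARD('x) - 1) * CARD('s) + 1)"
  shows "ereal (info p / ln 2) \<le> causal_bound PS W x0 b B"
proof -
  define k where "k = card (support p)"
  obtain h where h: "bij_betw h {..<k} (support p)"
    using ex_bij_betw_nat_finite[of "support p"] unfolding k_def atLeast0LessThan by auto
  define PV where "PV v = p (h v)" for v
  have "support p \<noteq> {}"
  proof
    assume "support p = {}"
    hence "p = (\<lambda>_. 0)" by (auto simp: support_def)
    thus False using sum1 by simp
  qed
  hence k_pos: "1 \<le> k" unfolding k_def by (simp add: Suc_leI card_gt_0_iff)
  have k_le: "k \<le> min (CARD('x) + CARD('y) + CARD('z) - 2) ((CARD('x) - 1) * CARD('s) + 1)"
    using card by (simp add: k_def)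
  have PV_nn: "\<forall>v<k. 0 \<le> PV v" by (simp add: PV_def nn)
  have Z: "(\<Sum>v<k. \<Sum>s\<in>UNIV. PV v * PS s * (\<Sum>y\<in>UNIV. W s (h v s) y z)) = Q0 PS W x0 z" for z
    using sum_support_reindex[OF h, of "\<lambda>u. outZ u z"] fun_cong[OF mixZ, of z]
    by (simp add: PV_def mixZ_def outZ_def sum_distrib_left mult.assoc)
  have cost_le: "(\<Sum>v<k. \<Sum>s\<in>UNIV. PV v * PS s * b (h v s)) \<le> B"
    using sum_support_reindex[OF h, of "\<lambda>u. \<Sum>s\<in>UNIV. PS s * b (u s)"] cost
    by (simp add: PV_def mix_cost_def sum_distrib_left mult.assoc)
  have PV_sum: "(\<Sum>v<k. PV v) = 1" using sum_support_reindex[OF h, of "\<lambda>_. 1"] sum1 by (simp add: PV_def)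
  have "mutual_info (joint_VY PS W PV h) {..<k} UNIV \<le> causal_bound PS W x0 b B"
    unfolding causal_bound_def
    by (intro Sup_upper imageI CollectI exI[of _ k] exI[of _ PV] exI[of _ h] conjI refl allI
        k_pos k_le PV_nn PV_sum Z cost_le)
  thus ?thesis using mutual_info_eq_info[OF h nn] by (simp add: PV_def[abs_def])
qed

lemma info_le_causal_bound:
  assumes nn: "\<And>u. 0 \<le> p u" and sum1: "(\<Sum>u\<in>UNIV. p u) = 1" and mixZ: "mixZ p = Q0 PS W x0"
    and cost: "mix_cost b p \<le> B"
  shows "ereal (info p / ln 2) \<le> causal_bound PS W x0 b B"
proof -
  obtain p' where p': "improves b p p'"
      "card (support p') \<le> min (CARD('x) + CARD('y) + CARD('z) - 2) ((CARD('x) - 1) * CARD('s) + 1)"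
    using support_reduction[of p, OF nn] by blast
  hence "ereal (info p' / ln 2) \<le> causal_bound PS W x0 b B"
    using assms by (intro small_support_info_le_causal_bound) (auto simp: improves_def)
  moreover have "info p / ln 2 \<le> info p' / ln 2" using p'(1) by (simp add: improves_def divide_right_mono)
  ultimately show ?thesis by (meson ereal_less_eq(3) order_trans)
qed

end

section \<open>Single-letterisation of a code\<close>

locale causal_code = causal_channel PS W for PS :: "'s::finite \<Rightarrow> real" and W :: "'s \<Rightarrow> 'x::finite \<Rightarrow> 'y::finite \<Rightarrow> 'z::finite \<Rightarrow> real" +
  fixes n M K :: nat and E :: "('s,'x) cenc set" and w :: "('s,'x) cenc \<Rightarrow> real"
  assumes finE: "finite E" and w_nn: "\<And>e. e \<in> E \<Longrightarrow> 0 \<le> w e" and w_sum: "sum w E = 1"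
    and n_pos: "0 < n" and M_pos: "0 < M" and K_pos: "0 < K"
begin

definition J where "J e m k ss ys zs = joint_prob PS W M K w e m k ss ys zs"

definition Jsum :: "(nat \<Rightarrow> nat \<Rightarrow> ('s,'x) cenc \<Rightarrow> 's list \<Rightarrow> 'y list \<Rightarrow> 'z list \<Rightarrow> real) \<Rightarrow> real" where
  "Jsum F = (\<Sum>m<M. \<Sum>k<K. \<Sum>e\<in>E. \<Sum>ss\<in>lists_n n. \<Sum>ys\<in>lists_n n. \<Sum>zs\<in>lists_n n. F m k e ss ys zs)"

lemma Jsum_add: "Jsum (\<lambda>m k e ss ys zs. F m k e ss ys zs + G m k e ss ys zs) = Jsum F + Jsum G"
  unfolding Jsum_def by (simp add: sum.distrib)

lemma Jsum_cmult: "Jsum (\<lambda>m k e ss ys zs. c * F m k e ss ys zs) = c * Jsum F"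
  unfolding Jsum_def by (simp add: sum_distrib_left)

lemma Jsum_diff: "Jsum (\<lambda>m k e ss ys zs. F m k e ss ys zs - G m k e ss ys zs) = Jsum F - Jsum G"
  unfolding Jsum_def by (simp add: sum_subtractf)

lemma Jsum_sum: "finite I \<Longrightarrow> Jsum (\<lambda>m k e ss ys zs. \<Sum>i\<in>I. F i m k e ss ys zs) = (\<Sum>i\<in>I. Jsum (F i))"
proof (induction I rule: finite_induct)
  case empty thus ?case by (simp add: Jsum_def)
next
  case (insert x F)
  thus ?case by (simp add: Jsum_add)
qed

lemma Jsum_mono: "(\<And>m k e ss ys zs. m < M \<Longrightarrow> k < K \<Longrightarrow> e \<in> E \<Longrightarrow> ss \<in> lists_n n \<Longrightarrow> ys \<in> lists_n n \<Longrightarrow> zs \<in> lists_n n \<Longrightarrow> F m k e ss ys zs \<le> G m k e ss ys zs) \<Longrightarrow> Jsum F \<le> Jsum G"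
  unfolding Jsum_def by (intro sum_mono) auto

lemma Jsum_cong: "(\<And>m k e ss ys zs. m < M \<Longrightarrow> k < K \<Longrightarrow> e \<in> E \<Longrightarrow> ss \<in> lists_n n \<Longrightarrow> ys \<in> lists_n n \<Longrightarrow> zs \<in> lists_n n \<Longrightarrow> F m k e ss ys zs = G m k e ss ys zs) \<Longrightarrow> Jsum F = Jsum G"
  unfolding Jsum_def by (intro sum.cong) auto

lemma Jsum_nonneg: "(\<And>m k e ss ys zs. m < M \<Longrightarrow> k < K \<Longrightarrow> e \<in> E \<Longrightarrow> ss \<in> lists_n n \<Longrightarrow> ys \<in> lists_n n \<Longrightarrow> zs \<in> lists_n n \<Longrightarrow> 0 \<le> F m k e ss ys zs) \<Longrightarrow> 0 \<le> Jsum F"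
  unfolding Jsum_def by (intro sum_nonneg) auto

lemma Jsum_ge_term:
  assumes "\<And>m k e ss ys zs. m < M \<Longrightarrow> k < K \<Longrightarrow> e \<in> E \<Longrightarrow> ss \<in> lists_n n \<Longrightarrow> ys \<in> lists_n n \<Longrightarrow> zs \<in> lists_n n \<Longrightarrow> 0 \<le> F m k e ss ys zs"
    and "m < M" "k < K" "e \<in> E" "ss \<in> lists_n n" "ys \<in> lists_n n" "zs \<in> lists_n n"
  shows "F m k e ss ys zs \<le> Jsum F"
proof -
  have "F m k e ss ys zs \<le> (\<Sum>zs\<in>lists_n n. F m k e ss ys zs)"
    by (rule member_le_sum) (use assms in auto)
  also have "\<dots> \<le> (\<Sum>ys\<in>lists_n n. \<Sum>zs\<in>lists_n n. F m k e ss ys zs)"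
    by (rule member_le_sum[of ys _ "\<lambda>ys. \<Sum>zs\<in>lists_n n. F m k e ss ys zs"]) (use assms in \<open>auto intro!: sum_nonneg\<close>)
  also have "\<dots> \<le> (\<Sum>ss\<in>lists_n n. \<Sum>ys\<in>lists_n n. \<Sum>zs\<in>lists_n n. F m k e ss ys zs)"
    by (rule member_le_sum[of ss _ "\<lambda>ss. \<Sum>ys\<in>lists_n n. \<Sum>zs\<in>lists_n n. F m k e ss ys zs"]) (use assms in \<open>auto intro!: sum_nonneg\<close>)
  also have "\<dots> \<le> (\<Sum>e\<in>E. \<Sum>ss\<in>lists_n n. \<Sum>ys\<in>lists_n n. \<Sum>zs\<in>lists_n n. F m k e ss ys zs)"
    by (rule member_le_sum[of e _ "\<lambda>e. \<Sum>ss\<in>lists_n n. \<Sum>ys\<in>lists_n n. \<Sum>zs\<in>lists_n n. F m k e ss ys zs"]) (use assms finE in \<open>auto intro!: sum_nonneg\<close>)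
  also have "\<dots> \<le> (\<Sum>k<K. \<Sum>e\<in>E. \<Sum>ss\<in>lists_n n. \<Sum>ys\<in>lists_n n. \<Sum>zs\<in>lists_n n. F m k e ss ys zs)"
    by (rule member_le_sum[of k _ "\<lambda>k. \<Sum>e\<in>E. \<Sum>ss\<in>lists_n n. \<Sum>ys\<in>lists_n n. \<Sum>zs\<in>lists_n n. F m k e ss ys zs"]) (use assms finE in \<open>auto intro!: sum_nonneg\<close>)
  also have "\<dots> \<le> Jsum F" unfolding Jsum_def
    by (rule member_le_sum[of m _ "\<lambda>m. \<Sum>k<K. \<Sum>e\<in>E. \<Sum>ss\<in>lists_n n. \<Sum>ys\<in>lists_n n. \<Sum>zs\<in>lists_n n. F m k e ss ys zs"]) (use assms finE in \<open>auto intro!: sum_nonneg\<close>)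
  finally show ?thesis .
qed

lemma J_nn: "e \<in> E \<Longrightarrow> 0 \<le> J e m k ss ys zs"
  unfolding J_def joint_prob_def by (intro mult_nonneg_nonneg ps_nn ch_nn w_nn) auto

definition mk_weight where "mk_weight e = (1 / real M) * (1 / real K) * w e"

lemma J_eq_mk_weight: "J e m k ss ys zs = mk_weight e * (ps_n PS ss * ch_n W ss (xseq e m k ss) ys zs)"
  unfolding J_def joint_prob_def mk_weight_def by simp

lemma sum_mk_weight: "(\<Sum>m<M. \<Sum>k<K. \<Sum>e\<in>E. mk_weight e) = 1"
proof -
  have "(\<Sum>e\<in>E. mk_weight e) = 1 / (real M * real K)"
    unfolding mk_weight_def sum_distrib_left[symmetric] w_sum by simp
  thus ?thesis using M_pos K_pos by simp
qed

lemma mk_weight_nn: "e \<in> E \<Longrightarrow> 0 \<le> mk_weight e" unfolding mk_weight_def using w_nn by simp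

text \<open>strat_dist i is the law of the strategy U_i = e(M,K,S^{i-1},-) used at time i.\<close>
definition strat_dist :: "nat \<Rightarrow> ('s \<Rightarrow> 'x) \<Rightarrow> real" where
  "strat_dist i u = (\<Sum>m<M. \<Sum>k<K. \<Sum>e\<in>E. mk_weight e * (\<Sum>a\<in>lists_n i. ps_n PS a * (if (\<lambda>s. e m k (a @ [s])) = u then 1 else 0)))"

lemma strat_dist_nn: "0 \<le> strat_dist i u"
  unfolding strat_dist_def by (intro sum_nonneg mult_nonneg_nonneg mk_weight_nn ps_nn) auto

lemma strat_dist_sum: "(\<Sum>u\<in>UNIV. strat_dist i u) = 1"
proof -
  have "\<And>g :: 's list \<Rightarrow> 'x. (\<Sum>u\<in>UNIV. \<Sum>a\<in>lists_n i. ps_n PS a * (if (\<lambda>s. g (a @ [s])) = u then 1 else 0)) = 1"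
    by (subst sum.swap) (simp add: sum_ps sum_indicator_mult)
  hence "(\<Sum>u\<in>UNIV. strat_dist i u) = (\<Sum>m<M. \<Sum>k<K. \<Sum>e\<in>E. mk_weight e)"
    unfolding strat_dist_def
    by (subst sum3_swap[symmetric]) (simp add: sum_distrib_left[symmetric])
  thus ?thesis by (simp only: sum_mk_weight)
qed

text \<open>U_i is a function of (M,K,S^{i-1}) only, hence independent of S_i: this is where the
  causality of the encoder enters.\<close>
lemma Jsum_strategy_marginal:
  assumes "i < n"
  shows "Jsum (\<lambda>m k e ss ys zs. J e m k ss ys zs * f (\<lambda>s. e m k (take i ss @ [s])) (ss ! i) (ys ! i) (zs ! i))
       = (\<Sum>u\<in>UNIV. strat_dist i u * (\<Sum>s\<in>UNIV. \<Sum>y\<in>UNIV. \<Sum>z\<in>UNIV. PS s * W s (u s) y z * f u s y z))"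
proof -
  define G where "G u = (\<Sum>s\<in>UNIV. \<Sum>y\<in>UNIV. \<Sum>z\<in>UNIV. PS s * W s (u s) y z * f u s y z)" for u
  have distr: "\<And>c A. c * (\<Sum>u\<in>UNIV. A u * G u) = (\<Sum>u\<in>UNIV. (c * A u) * G u)"
    by (simp add: sum_distrib_left mult.assoc)
  have inner: "(\<Sum>ss\<in>lists_n n. \<Sum>ys\<in>lists_n n. \<Sum>zs\<in>lists_n n. J e m k ss ys zs * f (\<lambda>s. e m k (take i ss @ [s])) (ss ! i) (ys ! i) (zs ! i))
      = (\<Sum>u\<in>UNIV. (mk_weight e * (\<Sum>a\<in>lists_n i. ps_n PS a * (if (\<lambda>s. e m k (a @ [s])) = u then 1 else 0))) * G u)" for m k e
  proof -
    have "(\<Sum>ss\<in>lists_n n. \<Sum>ys\<in>lists_n n. \<Sum>zs\<in>lists_n n. J e m k ss ys zs * f (\<lambda>s. e m k (take i ss @ [s])) (ss ! i) (ys ! i) (zs ! i))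
        = mk_weight e * (\<Sum>ss\<in>lists_n n. \<Sum>ys\<in>lists_n n. \<Sum>zs\<in>lists_n n. ps_n PS ss * ch_n W ss (xseq e m k ss) ys zs * f (\<lambda>s. e m k (take i ss @ [s])) (ss ! i) (ys ! i) (zs ! i))"
      by (simp add: J_eq_mk_weight sum_distrib_left mult.assoc)
    also have "\<dots> = mk_weight e * (\<Sum>a\<in>lists_n i. ps_n PS a * G (\<lambda>s. e m k (a @ [s])))"
      using sum_channel_marginal_at[OF assms, of e m k "\<lambda>a s y z. f (\<lambda>s. e m k (a @ [s])) s y z"] by (simp add: G_def)
    also have "\<dots> = mk_weight e * (\<Sum>u\<in>UNIV. (\<Sum>a\<in>lists_n i. ps_n PS a * (if (\<lambda>s. e m k (a @ [s])) = u then 1 else 0)) * G u)"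
      using sum_regroup_by[where A="lists_n i" and h="\<lambda>a. ps_n PS a" and G=G and \<phi>="\<lambda>a s. e m k (a @ [s])"] by simp
    also have "\<dots> = (\<Sum>u\<in>UNIV. (mk_weight e * (\<Sum>a\<in>lists_n i. ps_n PS a * (if (\<lambda>s. e m k (a @ [s])) = u then 1 else 0))) * G u)"
      by (rule distr)
    finally show ?thesis .
  qed
  have "Jsum (\<lambda>m k e ss ys zs. J e m k ss ys zs * f (\<lambda>s. e m k (take i ss @ [s])) (ss ! i) (ys ! i) (zs ! i))
      = (\<Sum>m<M. \<Sum>k<K. \<Sum>e\<in>E. \<Sum>u\<in>UNIV. (mk_weight e * (\<Sum>a\<in>lists_n i. ps_n PS a * (if (\<lambda>s. e m k (a @ [s])) = u then 1 else 0))) * G u)"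
    unfolding Jsum_def inner by simp
  also have "\<dots> = (\<Sum>u\<in>UNIV. \<Sum>m<M. \<Sum>k<K. \<Sum>e\<in>E. (mk_weight e * (\<Sum>a\<in>lists_n i. ps_n PS a * (if (\<lambda>s. e m k (a @ [s])) = u then 1 else 0))) * G u)"
    by (rule sum3_swap)
  also have "\<dots> = (\<Sum>u\<in>UNIV. strat_dist i u * G u)"
    unfolding strat_dist_def by (simp add: sum_distrib_right)
  finally show ?thesis by (simp add: G_def)
qed

lemma Jsum_J: "Jsum (\<lambda>m k e ss ys zs. J e m k ss ys zs) = 1"
proof -
  have "Jsum (\<lambda>m k e ss ys zs. J e m k ss ys zs * (\<lambda>u s y z. 1) (\<lambda>s. e m k (take 0 ss @ [s])) (ss ! 0) (ys ! 0) (zs ! 0))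
        = (\<Sum>u\<in>UNIV. strat_dist 0 u * (\<Sum>s\<in>UNIV. \<Sum>y\<in>UNIV. \<Sum>z\<in>UNIV. PS s * W s (u s) y z * 1))"
    by (rule Jsum_strategy_marginal[OF n_pos])
  also have "\<dots> = (\<Sum>u\<in>UNIV. strat_dist 0 u)"
    by (simp add: sum_distrib_left[symmetric] mult.assoc W_sum PS_sum)
  finally show ?thesis by (simp add: strat_dist_sum)
qed

lemma Jsum_J_const: "Jsum (\<lambda>m k e ss ys zs. J e m k ss ys zs * c) = c"
  using Jsum_cmult[of c "\<lambda>m k e ss ys zs. J e m k ss ys zs"] Jsum_J by (simp add: mult.commute)

definition avg_strat :: "('s \<Rightarrow> 'x) \<Rightarrow> real" where
  "avg_strat u = (\<Sum>i<n. strat_dist i u) / real n"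

lemma avg_strat_nn: "0 \<le> avg_strat u" unfolding avg_strat_def by (intro divide_nonneg_nonneg sum_nonneg strat_dist_nn) auto

lemma avg_strat_sum: "(\<Sum>u\<in>UNIV. avg_strat u) = 1"
proof -
  have "(\<Sum>u\<in>UNIV. \<Sum>i<n. strat_dist i u) = (\<Sum>i<n. \<Sum>u\<in>UNIV. strat_dist i u)" by (rule sum.swap)
  thus ?thesis unfolding avg_strat_def using n_pos by (simp add: sum_divide_distrib[symmetric] strat_dist_sum)
qed

lemma Jsum_time_average:
  assumes "\<And>i. i < n \<Longrightarrow> Jsum (\<lambda>m k e ss ys zs. J e m k ss ys zs * f (\<lambda>s. e m k (take i ss @ [s])) (ss ! i) (ys ! i) (zs ! i))
       = (\<Sum>u\<in>UNIV. strat_dist i u * G u)"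
  shows "Jsum (\<lambda>m k e ss ys zs. J e m k ss ys zs * (\<Sum>i<n. f (\<lambda>s. e m k (take i ss @ [s])) (ss ! i) (ys ! i) (zs ! i)))
      = real n * (\<Sum>u\<in>UNIV. avg_strat u * G u)"
proof -
  have "Jsum (\<lambda>m k e ss ys zs. J e m k ss ys zs * (\<Sum>i<n. f (\<lambda>s. e m k (take i ss @ [s])) (ss ! i) (ys ! i) (zs ! i)))
      = (\<Sum>i<n. Jsum (\<lambda>m k e ss ys zs. J e m k ss ys zs * f (\<lambda>s. e m k (take i ss @ [s])) (ss ! i) (ys ! i) (zs ! i)))"
    by (simp add: sum_distrib_left Jsum_sum)
  also have "\<dots> = (\<Sum>i<n. \<Sum>u\<in>UNIV. strat_dist i u * G u)" by (simp add: assms)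
  also have "\<dots> = (\<Sum>u\<in>UNIV. \<Sum>i<n. strat_dist i u * G u)" by (rule sum.swap)
  also have "\<dots> = real n * (\<Sum>u\<in>UNIV. avg_strat u * G u)"
  proof -
    have "\<And>u. real n * (avg_strat u * G u) = (\<Sum>i<n. strat_dist i u * G u)"
      using n_pos by (simp add: avg_strat_def sum_distrib_right)
    thus ?thesis by (simp add: sum_distrib_left)
  qed
  finally show ?thesis .
qed

lemma exp_cost_eq:
  "exp_cost PS W b n M K E w = (\<Sum>u\<in>UNIV. avg_strat u * (\<Sum>s\<in>UNIV. PS s * b (u s)))"
proof -
  have "exp_cost PS W b n M K E w = Jsum (\<lambda>m k e ss ys zs. J e m k ss ys zs * ((\<Sum>i<n. b (xseq e m k ss ! i)) / real n))"
    unfolding exp_cost_def Jsum_def J_def by simp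
  also have "\<dots> = Jsum (\<lambda>m k e ss ys zs. (1 / real n) * (J e m k ss ys zs * (\<Sum>i<n. b (xseq e m k ss ! i))))"
    by (intro Jsum_cong) simp
  also have "\<dots> = Jsum (\<lambda>m k e ss ys zs. J e m k ss ys zs * (\<Sum>i<n. b (xseq e m k ss ! i))) / real n"
    using Jsum_cmult[of "1 / real n" "\<lambda>m k e ss ys zs. J e m k ss ys zs * (\<Sum>i<n. b (xseq e m k ss ! i))"] by simp
  also have "Jsum (\<lambda>m k e ss ys zs. J e m k ss ys zs * (\<Sum>i<n. b (xseq e m k ss ! i)))
      = Jsum (\<lambda>m k e ss ys zs. J e m k ss ys zs * (\<Sum>i<n. (\<lambda>u s y z. b (u s)) (\<lambda>s. e m k (take i ss @ [s])) (ss ! i) (ys ! i) (zs ! i)))"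
    by (intro Jsum_cong arg_cong2[where f="(*)"] refl sum.cong) (auto simp: lists_n_def nth_xseq)
  also have "\<dots> = real n * (\<Sum>u\<in>UNIV. avg_strat u * (\<Sum>s\<in>UNIV. PS s * b (u s)))"
  proof (rule Jsum_time_average)
    fix i assume "i < n"
    from Jsum_strategy_marginal[OF this, of "\<lambda>u s y z. b (u s)"] sum_channel_const[of _ "\<lambda>s. b (_ s)"]
    show "Jsum (\<lambda>m k e ss ys zs. J e m k ss ys zs * (\<lambda>u s y z. b (u s)) (\<lambda>s. e m k (take i ss @ [s])) (ss ! i) (ys ! i) (zs ! i))
       = (\<Sum>u\<in>UNIV. strat_dist i u * (\<Sum>s\<in>UNIV. PS s * b (u s)))"
      by simp
  qed
  finally show ?thesis using n_pos by simp
qed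

lemma err_Jsum: "err_prob PS W n M K E w dec = Jsum (\<lambda>m k e ss ys zs. J e m k ss ys zs * (if dec k ys \<noteq> m then 1 else 0))"
  unfolding err_prob_def Jsum_def J_def by simp

lemma err_prob_bounds: "0 \<le> err_prob PS W n M K E w dec \<and> err_prob PS W n M K E w dec \<le> 1"
proof
  show "0 \<le> err_prob PS W n M K E w dec" unfolding err_Jsum by (intro Jsum_nonneg mult_nonneg_nonneg J_nn) auto
  have "err_prob PS W n M K E w dec \<le> Jsum (\<lambda>m k e ss ys zs. J e m k ss ys zs)"
    unfolding err_Jsum by (intro Jsum_mono) (auto intro: J_nn)
  thus "err_prob PS W n M K E w dec \<le> 1" using Jsum_J by simp
qed

subsection \<open>Rate\<close>

definition avgY where "avgY = mixY avg_strat"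

lemma avgY_sum: "(\<Sum>y\<in>UNIV. avgY y) = 1" unfolding avgY_def by (rule mixY_sum[OF avg_strat_sum])

lemma avgY_nn: "0 \<le> avgY y" unfolding avgY_def mixY_def by (intro sum_nonneg mult_nonneg_nonneg avg_strat_nn outY_nn)

lemma strat_dist_outY_le: assumes "j < n" shows "(\<Sum>u\<in>UNIV. strat_dist j u * outY u y) \<le> real n * avgY y"
proof -
  have "(\<Sum>u\<in>UNIV. strat_dist j u * outY u y) \<le> (\<Sum>u\<in>UNIV. (\<Sum>i<n. strat_dist i u) * outY u y)"
    using assms by (intro sum_mono mult_right_mono outY_nn member_le_sum strat_dist_nn) auto
  moreover have "(\<Sum>u\<in>UNIV. (\<Sum>i<n. strat_dist i u) * outY u y) = real n * avgY y"
    using n_pos by (simp add: avgY_def mixY_def avg_strat_def sum_distrib_left)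
  ultimately show ?thesis by simp
qed

definition strat_at where "strat_at e m k ss j = (\<lambda>s. e m k (take j ss @ [s]))"

lemma J_pos_imp_outputs_pos:
  assumes J: "0 < J e m k ss ys zs" and mem: "m < M" "k < K" "e \<in> E" "ss \<in> lists_n n" "ys \<in> lists_n n" "zs \<in> lists_n n"
    and j: "j < n"
  shows "0 < outY (strat_at e m k ss j) (ys ! j)" "0 < avgY (ys ! j)"
proof -
  have l: "length ss = n" using mem by (simp add: lists_n_def)
  have "ps_n PS ss \<noteq> 0" "ch_n W ss (xseq e m k ss) ys zs \<noteq> 0" using J by (auto simp: J_eq_mk_weight)
  hence "PS (ss ! j) \<noteq> 0" "W (ss ! j) (xseq e m k ss ! j) (ys ! j) (zs ! j) \<noteq> 0"
    using j l by (auto simp: ps_n_def ch_n_def prod_zero_iff)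
  hence "0 < PS (ss ! j)" "0 < W (ss ! j) (strat_at e m k ss j (ss ! j)) (ys ! j) (zs ! j)"
    using PS_nn[of "ss ! j"] W_nn j l by (auto simp: nth_xseq strat_at_def order_le_neq_trans)
  thus "0 < outY (strat_at e m k ss j) (ys ! j)" by (rule outY_pos)
  have "Jsum (\<lambda>m k e ss ys' zs. J e m k ss ys' zs * (\<lambda>u s y' z. if y' = ys ! j then 1 else 0) (\<lambda>s. e m k (take j ss @ [s])) (ss ! j) (ys' ! j) (zs ! j))
      = (\<Sum>u\<in>UNIV. strat_dist j u * (\<Sum>s\<in>UNIV. \<Sum>y'\<in>UNIV. \<Sum>z\<in>UNIV. PS s * W s (u s) y' z * (if y' = ys ! j then 1 else 0)))"
    by (rule Jsum_strategy_marginal[OF j])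
  also have "\<dots> = (\<Sum>u\<in>UNIV. strat_dist j u * outY u (ys ! j))" by (simp add: outY_eq_indicator)
  also have "\<dots> \<le> real n * avgY (ys ! j)" by (rule strat_dist_outY_le[OF j])
  finally have le: "Jsum (\<lambda>m k e ss ys' zs. J e m k ss ys' zs * (if ys' ! j = ys ! j then 1 else 0)) \<le> real n * avgY (ys ! j)"
    by simp
  have "J e m k ss ys zs * (if ys ! j = ys ! j then 1 else 0) \<le> Jsum (\<lambda>m k e ss ys' zs. J e m k ss ys' zs * (if ys' ! j = ys ! j then 1 else 0))"
    by (rule Jsum_ge_term[where F="\<lambda>m k e ss ys' zs. J e m k ss ys' zs * (if ys' ! j = ys ! j then 1 else 0)"])
       (use mem in \<open>auto intro: J_nn\<close>)
  hence "0 < real n * avgY (ys ! j)" using J le by simp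
  thus "0 < avgY (ys ! j)" using n_pos by (simp add: zero_less_mult_iff)
qed

text \<open>An auxiliary law of M given (K,Y^n): mass 1/2 on the decoded message and the rest spread
  uniformly, so that its logarithm is controlled by the error event.\<close>
definition guess where
  "guess dec m k ys = (if dec k ys < M then (if m = dec k ys then 1/2 else 1 / (2 * (real M - 1))) else 1 / real M)"

lemma guess_pos: "m < M \<Longrightarrow> 0 < guess dec m k ys"
  unfolding guess_def by (auto simp: of_nat_less_iff[symmetric])

lemma guess_ln: "m < M \<Longrightarrow> - ln 2 - (if dec k ys \<noteq> m then ln (real M) else 0) \<le> ln (guess dec m k ys)"
proof -
  assume m: "m < M"
  show ?thesis
  proof (cases "dec k ys < M")
    case True
    show ?thesis
    proof (cases "m = dec k ys")
      case True thus ?thesis using \<open>dec k ys < M\<close> by (simp add: guess_def ln_div)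
    next
      case False
      hence M2: "2 \<le> M" using m True by linarith
      hence pos: "0 < real M - 1" by simp
      have "ln (2 * (real M - 1)) = ln 2 + ln (real M - 1)"
        by (subst ln_mult) (use pos in simp)
      moreover have "ln (1 / (2 * (real M - 1))) = - ln (2 * (real M - 1))"
        by (subst ln_div) (use pos in simp)
      ultimately have "ln (1 / (2 * (real M - 1))) = - ln 2 - ln (real M - 1)" by simp
      moreover have "ln (real M - 1) \<le> ln (real M)" using M2 by simp
      ultimately show ?thesis using True False by (simp add: guess_def)
    qed
  next
    case False
    hence "dec k ys \<noteq> m" using m by auto
    thus ?thesis using False M_pos by (simp add: guess_def ln_div)
  qed
qed

lemma guess_sum: "(\<Sum>m<M. guess dec m k ys) \<le> 1"
proof (cases "dec k ys < M")
  case True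
  have "(\<Sum>m<M. guess dec m k ys) = guess dec (dec k ys) k ys + (\<Sum>m\<in>{..<M} - {dec k ys}. guess dec m k ys)"
    using True by (simp add: sum.remove)
  also have "(\<Sum>m\<in>{..<M} - {dec k ys}. guess dec m k ys) = (real M - 1) * (1 / (2 * (real M - 1)))"
    using True by (simp add: guess_def)
  also have "\<dots> \<le> 1/2"
  proof -
    have "\<And>x::real. x * (1 / (2 * x)) \<le> 1/2" by (case_tac "x = 0") (simp_all add: field_simps)
    thus ?thesis by blast
  qed
  finally show ?thesis using True by (simp add: guess_def)
next
  case False
  thus ?thesis using M_pos by (simp add: guess_def)
qed

text \<open>The auxiliary law guess \<times> (i.i.d. avgY) of (M, Y^n), divided by the law with M uniform and
  Y_i distributed as outY U_i given the strategies.\<close>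
definition lratio where
  "lratio dec e m k ss ys = real M * guess dec m k ys * (\<Prod>j<n. avgY (ys ! j)) / (\<Prod>j<n. outY (strat_at e m k ss j) (ys ! j))"

lemma sum_ch_n_z:
  assumes "ss \<in> lists_n n"
  shows "(\<Sum>zs\<in>lists_n n. ch_n W ss xs ys zs) = (\<Prod>j<n. chY (ss ! j) (xs ! j) (ys ! j))"
proof -
  have l: "length ss = n" using assms by (simp add: lists_n_def)
  show ?thesis unfolding ch_n_def l chY_def
    by (rule sum_prod_lists_n[where F="\<lambda>j z. W (ss ! j) (xs ! j) (ys ! j) z"])
qed

lemma sum_ps_ch_lratio_le:
  assumes m: "m < M"
  shows "(\<Sum>ss\<in>lists_n n. \<Sum>zs\<in>lists_n n. ps_n PS ss * ch_n W ss (xseq e m k ss) ys zs * lratio dec e m k ss ys)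
     \<le> real M * guess dec m k ys * (\<Prod>j<n. avgY (ys ! j))"
proof -
  define A where "A = real M * guess dec m k ys * (\<Prod>j<n. avgY (ys ! j))"
  have A_nn: "0 \<le> A" unfolding A_def using guess_pos[OF m, of dec k ys]
    by (intro mult_nonneg_nonneg prod_nonneg avgY_nn) auto
  have "(\<Sum>ss\<in>lists_n n. \<Sum>zs\<in>lists_n n. ps_n PS ss * ch_n W ss (xseq e m k ss) ys zs * lratio dec e m k ss ys)
      = (\<Sum>ss\<in>lists_n n. A * (\<Prod>j<n. post_state (\<lambda>s. e m k (take j ss @ [s])) (ss ! j) (ys ! j)))"
  proof (intro sum.cong refl)
    fix ss :: "'s list" assume ss: "ss \<in> lists_n n"
    hence l: "length ss = n" by (simp add: lists_n_def)
    have "(\<Sum>zs\<in>lists_n n. ps_n PS ss * ch_n W ss (xseq e m k ss) ys zs * lratio dec e m k ss ys)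
        = ps_n PS ss * (\<Prod>j<n. chY (ss ! j) (xseq e m k ss ! j) (ys ! j)) * lratio dec e m k ss ys"
      by (simp add: sum_distrib_left[symmetric] sum_distrib_right[symmetric] sum_ch_n_z[OF ss])
    also have "(\<Prod>j<n. chY (ss ! j) (xseq e m k ss ! j) (ys ! j)) = (\<Prod>j<n. chY (ss ! j) (strat_at e m k ss j (ss ! j)) (ys ! j))"
      by (intro prod.cong refl) (simp add: l nth_xseq strat_at_def)
    also have "ps_n PS ss * (\<Prod>j<n. chY (ss ! j) (strat_at e m k ss j (ss ! j)) (ys ! j)) * lratio dec e m k ss ys
        = A * ((\<Prod>j<n. PS (ss ! j)) * (\<Prod>j<n. chY (ss ! j) (strat_at e m k ss j (ss ! j)) (ys ! j)) / (\<Prod>j<n. outY (strat_at e m k ss j) (ys ! j)))"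
      by (simp add: lratio_def A_def ps_n_lists[OF ss])
    also have "\<dots> = A * (\<Prod>j<n. post_state (\<lambda>s. e m k (take j ss @ [s])) (ss ! j) (ys ! j))"
      by (simp add: post_state_def prod_dividef prod.distrib strat_at_def)
    finally show "(\<Sum>zs\<in>lists_n n. ps_n PS ss * ch_n W ss (xseq e m k ss) ys zs * lratio dec e m k ss ys)
        = A * (\<Prod>j<n. post_state (\<lambda>s. e m k (take j ss @ [s])) (ss ! j) (ys ! j))" .
  qed
  also have "\<dots> = A * (\<Sum>ss\<in>lists_n n. \<Prod>j<n. post_state (\<lambda>s. e m k (take j ss @ [s])) (ss ! j) (ys ! j))"
    by (simp add: sum_distrib_left)
  also have "\<dots> \<le> A * 1" by (intro mult_left_mono sum_prod_post_state_le_1 A_nn)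
  finally show ?thesis by (simp add: A_def)
qed

lemma sum_guess_avgY_le_1: "(\<Sum>m<M. \<Sum>ys\<in>lists_n n. guess dec m k ys * (\<Prod>j<n. avgY (ys ! j))) \<le> 1"
proof -
  have "(\<Sum>m<M. \<Sum>ys\<in>lists_n n. guess dec m k ys * (\<Prod>j<n. avgY (ys ! j)))
      = (\<Sum>ys\<in>lists_n n. (\<Sum>m<M. guess dec m k ys) * (\<Prod>j<n. avgY (ys ! j)))"
    by (subst sum.swap) (simp add: sum_distrib_right)
  also have "\<dots> \<le> (\<Sum>ys\<in>lists_n n. \<Prod>j<n. avgY (ys ! j))"
    by (intro sum_mono mult_left_le_one_le guess_sum prod_nonneg avgY_nn sum_nonneg less_imp_le guess_pos) auto
  also have "\<dots> = 1" using sum_prod_lists_n[of "\<lambda>j. avgY" n] by (simp add: avgY_sum)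
  finally show ?thesis .
qed

lemma sum_J_lratio_le:
  assumes "e \<in> E" "m < M"
  shows "(\<Sum>ss\<in>lists_n n. \<Sum>ys\<in>lists_n n. \<Sum>zs\<in>lists_n n. J e m k ss ys zs * lratio dec e m k ss ys)
      \<le> mk_weight e * real M * (\<Sum>ys\<in>lists_n n. guess dec m k ys * (\<Prod>j<n. avgY (ys ! j)))"
proof -
  have "(\<Sum>ss\<in>lists_n n. \<Sum>ys\<in>lists_n n. \<Sum>zs\<in>lists_n n. J e m k ss ys zs * lratio dec e m k ss ys)
      = mk_weight e * (\<Sum>ys\<in>lists_n n. \<Sum>ss\<in>lists_n n. \<Sum>zs\<in>lists_n n.
          ps_n PS ss * ch_n W ss (xseq e m k ss) ys zs * lratio dec e m k ss ys)"
    by (subst sum.swap) (simp add: J_eq_mk_weight sum_distrib_left mult.assoc)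
  also have "\<dots> \<le> mk_weight e * (\<Sum>ys\<in>lists_n n. real M * guess dec m k ys * (\<Prod>j<n. avgY (ys ! j)))"
    using assms by (intro mult_left_mono sum_mono sum_ps_ch_lratio_le mk_weight_nn)
  finally show ?thesis by (simp add: sum_distrib_left mult_ac)
qed

lemma Jsum_lratio_le_1: "Jsum (\<lambda>m k e ss ys zs. J e m k ss ys zs * lratio dec e m k ss ys) \<le> 1"
proof -
  have "Jsum (\<lambda>m k e ss ys zs. J e m k ss ys zs * lratio dec e m k ss ys)
      \<le> (\<Sum>m<M. \<Sum>k<K. \<Sum>e\<in>E. mk_weight e * real M * (\<Sum>ys\<in>lists_n n. guess dec m k ys * (\<Prod>j<n. avgY (ys ! j))))"
    unfolding Jsum_def by (intro sum_mono sum_J_lratio_le) auto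
  also have "\<dots> = (\<Sum>k<K. \<Sum>e\<in>E. mk_weight e * real M
      * (\<Sum>m<M. \<Sum>ys\<in>lists_n n. guess dec m k ys * (\<Prod>j<n. avgY (ys ! j))))"
    by (subst sum.swap) (simp add: sum.swap[of _ "{..<M}"] sum_distrib_left)
  also have "\<dots> \<le> (\<Sum>k<K. \<Sum>e\<in>E. mk_weight e * real M)"
    by (intro sum_mono mult_right_le_one_le sum_guess_avgY_le_1 mult_nonneg_nonneg mk_weight_nn sum_nonneg
        prod_nonneg avgY_nn less_imp_le guess_pos) (auto simp: M_pos)
  also have "\<dots> = 1"
  proof -
    have "(\<Sum>e\<in>E. mk_weight e * real M) = 1 / real K"
      unfolding mk_weight_def using M_pos by (simp add: sum_divide_distrib[symmetric] w_sum)
    thus ?thesis using K_pos by simp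
  qed
  finally show ?thesis .
qed

lemma Jsum_ln_avgY: "Jsum (\<lambda>m k e ss ys zs. J e m k ss ys zs * (\<Sum>i<n. ln (avgY (ys ! i))))
   = real n * (\<Sum>y\<in>UNIV. avgY y * ln (avgY y))"
proof -
  have "Jsum (\<lambda>m k e ss ys zs. J e m k ss ys zs * (\<Sum>i<n. (\<lambda>u s y z. ln (avgY y)) (\<lambda>s. e m k (take i ss @ [s])) (ss ! i) (ys ! i) (zs ! i)))
      = real n * (\<Sum>u\<in>UNIV. avg_strat u * (\<Sum>y\<in>UNIV. outY u y * ln (avgY y)))"
  proof (rule Jsum_time_average)
    fix i assume "i < n"
    from Jsum_strategy_marginal[OF this, of "\<lambda>u s y z. ln (avgY y)"]
    show "Jsum (\<lambda>m k e ss ys zs. J e m k ss ys zs * (\<lambda>u s y z. ln (avgY y)) (\<lambda>s. e m k (take i ss @ [s])) (ss ! i) (ys ! i) (zs ! i))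
        = (\<Sum>u\<in>UNIV. strat_dist i u * (\<Sum>y\<in>UNIV. outY u y * ln (avgY y)))"
      by (simp add: sum_outY)
  qed
  also have "(\<Sum>u\<in>UNIV. avg_strat u * (\<Sum>y\<in>UNIV. outY u y * ln (avgY y))) = (\<Sum>y\<in>UNIV. avgY y * ln (avgY y))"
  proof -
    have "(\<Sum>u\<in>UNIV. avg_strat u * (\<Sum>y\<in>UNIV. outY u y * ln (avgY y))) = (\<Sum>u\<in>UNIV. \<Sum>y\<in>UNIV. avg_strat u * outY u y * ln (avgY y))"
      by (simp add: sum_distrib_left mult.assoc)
    also have "\<dots> = (\<Sum>y\<in>UNIV. \<Sum>u\<in>UNIV. avg_strat u * outY u y * ln (avgY y))" by (rule sum.swap)
    also have "\<dots> = (\<Sum>y\<in>UNIV. avgY y * ln (avgY y))" by (simp add: sum_distrib_right avgY_def mixY_def)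
    finally show ?thesis .
  qed
  finally show ?thesis by simp
qed

lemma Jsum_ln_outY: "Jsum (\<lambda>m k e ss ys zs. J e m k ss ys zs * (\<Sum>i<n. ln (outY (strat_at e m k ss i) (ys ! i))))
   = real n * (\<Sum>u\<in>UNIV. avg_strat u * (\<Sum>y\<in>UNIV. outY u y * ln (outY u y)))"
proof -
  have "Jsum (\<lambda>m k e ss ys zs. J e m k ss ys zs * (\<Sum>i<n. (\<lambda>u s y z. ln (outY u y)) (\<lambda>s. e m k (take i ss @ [s])) (ss ! i) (ys ! i) (zs ! i)))
      = real n * (\<Sum>u\<in>UNIV. avg_strat u * (\<Sum>y\<in>UNIV. outY u y * ln (outY u y)))"
  proof (rule Jsum_time_average)
    fix i assume "i < n"
    from Jsum_strategy_marginal[OF this, of "\<lambda>u s y z. ln (outY u y)"]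
    show "Jsum (\<lambda>m k e ss ys zs. J e m k ss ys zs * (\<lambda>u s y z. ln (outY u y)) (\<lambda>s. e m k (take i ss @ [s])) (ss ! i) (ys ! i) (zs ! i))
        = (\<Sum>u\<in>UNIV. strat_dist i u * (\<Sum>y\<in>UNIV. outY u y * ln (outY u y)))"
      by (simp add: sum_outY[of _ "\<lambda>y. ln (outY _ y)"])
  qed
  thus ?thesis by (simp add: strat_at_def)
qed

lemma lratio_pos_and_ln:
  assumes J: "0 < J e m k ss ys zs"
    and mem: "m < M" "k < K" "e \<in> E" "ss \<in> lists_n n" "ys \<in> lists_n n" "zs \<in> lists_n n"
  shows "0 < lratio dec e m k ss ys"
    and "ln (lratio dec e m k ss ys) = ln (real M) + ln (guess dec m k ys)
           + (\<Sum>i<n. ln (avgY (ys ! i))) - (\<Sum>i<n. ln (outY (strat_at e m k ss i) (ys ! i)))"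
proof -
  have outY_pos: "\<And>i. i < n \<Longrightarrow> 0 < outY (strat_at e m k ss i) (ys ! i)"
    and avgY_pos: "\<And>i. i < n \<Longrightarrow> 0 < avgY (ys ! i)"
    using J_pos_imp_outputs_pos[OF J mem] by auto
  define A where "A = (\<Prod>i<n. avgY (ys ! i))"
  define B where "B = (\<Prod>i<n. outY (strat_at e m k ss i) (ys ! i))"
  have AB: "0 < A" "0 < B" using avgY_pos outY_pos by (auto simp: A_def B_def intro: prod_pos)
  have Q: "0 < guess dec m k ys" "0 < real M" using guess_pos[OF mem(1)] M_pos by auto
  show "0 < lratio dec e m k ss ys" unfolding lratio_def A_def[symmetric] B_def[symmetric] using AB Q by simp
  have "ln (lratio dec e m k ss ys) = ln (real M) + ln (guess dec m k ys) + ln A - ln B"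
    unfolding lratio_def A_def[symmetric] B_def[symmetric] using AB Q by (simp add: ln_div ln_mult)
  also have "ln A = (\<Sum>i<n. ln (avgY (ys ! i)))"
    unfolding A_def using avgY_pos by (intro ln_prod) (auto simp: less_imp_neq[symmetric])
  also have "ln B = (\<Sum>i<n. ln (outY (strat_at e m k ss i) (ys ! i)))"
    unfolding B_def using outY_pos by (intro ln_prod) (auto simp: less_imp_neq[symmetric])
  finally show "ln (lratio dec e m k ss ys) = ln (real M) + ln (guess dec m k ys)
      + (\<Sum>i<n. ln (avgY (ys ! i))) - (\<Sum>i<n. ln (outY (strat_at e m k ss i) (ys ! i)))" .
qed

lemma Jsum_ln_guess_ge:
  "- ln 2 - err_prob PS W n M K E w dec * ln (real M)
     \<le> Jsum (\<lambda>m k e ss ys zs. J e m k ss ys zs * ln (guess dec m k ys))"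
proof -
  have "- ln 2 - err_prob PS W n M K E w dec * ln (real M)
      = Jsum (\<lambda>m k e ss ys zs. J e m k ss ys zs * (- ln 2))
        - Jsum (\<lambda>m k e ss ys zs. ln (real M) * (J e m k ss ys zs * (if dec k ys \<noteq> m then 1 else 0)))"
    using Jsum_J_const[of "- ln 2"] by (simp add: Jsum_cmult err_Jsum)
  also have "\<dots> = Jsum (\<lambda>m k e ss ys zs. J e m k ss ys zs * (- ln 2 - (if dec k ys \<noteq> m then ln (real M) else 0)))"
    by (subst Jsum_diff[symmetric]) (intro Jsum_cong, simp add: algebra_simps)
  also have "\<dots> \<le> Jsum (\<lambda>m k e ss ys zs. J e m k ss ys zs * ln (guess dec m k ys))"
    by (intro Jsum_mono mult_left_mono guess_ln J_nn)
  finally show ?thesis .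
qed

text \<open>Gibbs' inequality for the likelihood ratio lratio, whose expectation is at most 1.\<close>
lemma fano_rate_bound:
  "ln (real M) - ln 2 - err_prob PS W n M K E w dec * ln (real M) \<le> real n * info avg_strat"
proof -
  define LX where "LX m k e ss ys zs = J e m k ss ys zs * (ln (real M) + ln (guess dec m k ys)
     + (\<Sum>i<n. ln (avgY (ys ! i))) - (\<Sum>i<n. ln (outY (strat_at e m k ss i) (ys ! i))))" for m k e ss ys zs
  have "LX m k e ss ys zs \<le> J e m k ss ys zs * lratio dec e m k ss ys - J e m k ss ys zs"
    if mem: "m < M" "k < K" "e \<in> E" "ss \<in> lists_n n" "ys \<in> lists_n n" "zs \<in> lists_n n" for m k e ss ys zs
  proof (cases "J e m k ss ys zs = 0")
    case False
    hence J: "0 < J e m k ss ys zs" using J_nn[OF mem(3)] by (simp add: order_le_neq_trans)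
    have "LX m k e ss ys zs = J e m k ss ys zs * ln (lratio dec e m k ss ys)"
      by (simp add: LX_def lratio_pos_and_ln(2)[OF J mem])
    also have "\<dots> \<le> J e m k ss ys zs * (lratio dec e m k ss ys - 1)"
      using J lratio_pos_and_ln(1)[OF J mem] by (intro mult_left_mono ln_le_minus_one) auto
    finally show ?thesis by (simp add: algebra_simps)
  qed (simp add: LX_def)
  hence "Jsum LX \<le> Jsum (\<lambda>m k e ss ys zs. J e m k ss ys zs * lratio dec e m k ss ys - J e m k ss ys zs)"
    by (intro Jsum_mono)
  also have "\<dots> \<le> 0" using Jsum_lratio_le_1[of dec] Jsum_J by (simp add: Jsum_diff)
  finally have "Jsum LX \<le> 0" .
  moreover have "Jsum LX = ln (real M) + Jsum (\<lambda>m k e ss ys zs. J e m k ss ys zs * ln (guess dec m k ys))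
      + real n * (\<Sum>y\<in>UNIV. avgY y * ln (avgY y)) - real n * (\<Sum>u\<in>UNIV. avg_strat u * (\<Sum>y\<in>UNIV. outY u y * ln (outY u y)))"
    unfolding LX_def
    by (simp add: distrib_left right_diff_distrib Jsum_add Jsum_diff Jsum_J_const Jsum_ln_avgY Jsum_ln_outY)
  ultimately show ?thesis using Jsum_ln_guess_ge[of dec] by (simp add: info_def negHY_def avgY_def algebra_simps)
qed

subsection \<open>Covertness\<close>

definition outz where "outz = out_z PS W n M K E w"

definition avgZ where "avgZ = mixZ avg_strat"

lemma outz_sum: "(\<Sum>zs\<in>lists_n n. outz zs * f zs) = Jsum (\<lambda>m k e ss ys zs. J e m k ss ys zs * f zs)"
proof -
  have "(\<Sum>zs\<in>lists_n n. outz zs * f zs) = (\<Sum>zs\<in>lists_n n. \<Sum>m<M. \<Sum>k<K. \<Sum>e\<in>E. \<Sum>ss\<in>lists_n n. \<Sum>ys\<in>lists_n n. J e m k ss ys zs * f zs)"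
    unfolding outz_def out_z_def J_def by (simp add: sum_distrib_right)
  also have "\<dots> = Jsum (\<lambda>m k e ss ys zs. J e m k ss ys zs * f zs)"
    unfolding Jsum_def by (rule sum6_swap)
  finally show ?thesis .
qed

lemma outz_nn: "0 \<le> outz zs"
  unfolding outz_def out_z_def by (intro sum_nonneg) (auto simp: J_def[symmetric] intro: J_nn)

lemma outz_total: "(\<Sum>zs\<in>lists_n n. outz zs) = 1"
  using outz_sum[of "\<lambda>_. 1"] Jsum_J by simp

lemma outz_time_average: "(\<Sum>zs\<in>lists_n n. outz zs * (\<Sum>i<n. g (zs ! i))) = real n * (\<Sum>z\<in>UNIV. avgZ z * g z)"
proof -
  have "Jsum (\<lambda>m k e ss ys zs. J e m k ss ys zs * (\<Sum>i<n. (\<lambda>u s y z. g z) (\<lambda>s. e m k (take i ss @ [s])) (ss ! i) (ys ! i) (zs ! i)))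
      = real n * (\<Sum>u\<in>UNIV. avg_strat u * (\<Sum>z\<in>UNIV. outZ u z * g z))"
  proof (rule Jsum_time_average)
    fix i assume "i < n"
    from Jsum_strategy_marginal[OF this, of "\<lambda>u s y z. g z"]
    show "Jsum (\<lambda>m k e ss ys zs. J e m k ss ys zs * (\<lambda>u s y z. g z) (\<lambda>s. e m k (take i ss @ [s])) (ss ! i) (ys ! i) (zs ! i))
        = (\<Sum>u\<in>UNIV. strat_dist i u * (\<Sum>z\<in>UNIV. outZ u z * g z))"
      by (simp add: sum_outZ)
  qed
  also have "(\<Sum>u\<in>UNIV. avg_strat u * (\<Sum>z\<in>UNIV. outZ u z * g z)) = (\<Sum>z\<in>UNIV. avgZ z * g z)"
  proof -
    have "(\<Sum>u\<in>UNIV. avg_strat u * (\<Sum>z\<in>UNIV. outZ u z * g z)) = (\<Sum>u\<in>UNIV. \<Sum>z\<in>UNIV. avg_strat u * outZ u z * g z)"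
      by (simp add: sum_distrib_left mult.assoc)
    also have "\<dots> = (\<Sum>z\<in>UNIV. \<Sum>u\<in>UNIV. avg_strat u * outZ u z * g z)" by (rule sum.swap)
    also have "\<dots> = (\<Sum>z\<in>UNIV. avgZ z * g z)" by (simp add: sum_distrib_right avgZ_def mixZ_def)
    finally show ?thesis .
  qed
  finally show ?thesis by (simp add: outz_sum)
qed

lemma avgZ_pos:
  assumes "0 < outz zs" "zs \<in> lists_n n" "i < n"
  shows "0 < avgZ (zs ! i)"
proof -
  have "Jsum (\<lambda>m k e ss ys zs'. J e m k ss ys zs' * (\<lambda>u s y z. if z = zs ! i then 1 else 0) (\<lambda>s. e m k (take i ss @ [s])) (ss ! i) (ys ! i) (zs' ! i))
      = (\<Sum>u\<in>UNIV. strat_dist i u * (\<Sum>s\<in>UNIV. \<Sum>y\<in>UNIV. \<Sum>z\<in>UNIV. PS s * W s (u s) y z * (if z = zs ! i then 1 else 0)))"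
    by (rule Jsum_strategy_marginal[OF assms(3)])
  also have "\<dots> = (\<Sum>u\<in>UNIV. strat_dist i u * outZ u (zs ! i))"
  proof -
    have "\<And>u. (\<Sum>z\<in>UNIV. outZ u z * (if z = zs ! i then 1 else 0)) = outZ u (zs ! i)"
    proof -
      fix u
      have "(\<Sum>z\<in>UNIV. outZ u z * (if z = zs ! i then 1 else 0)) = (\<Sum>z\<in>UNIV. if z = zs ! i then outZ u (zs ! i) else 0)"
        by (rule sum.cong) auto
      thus "(\<Sum>z\<in>UNIV. outZ u z * (if z = zs ! i then 1 else 0)) = outZ u (zs ! i)" by simp
    qed
    thus ?thesis by (simp add: sum_outZ)
  qed
  also have "\<dots> \<le> (\<Sum>u\<in>UNIV. (\<Sum>j<n. strat_dist j u) * outZ u (zs ! i))"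
    using assms(3) by (intro sum_mono mult_right_mono outZ_nn member_le_sum strat_dist_nn) auto
  also have "\<dots> = real n * avgZ (zs ! i)"
    using n_pos by (simp add: avgZ_def mixZ_def avg_strat_def sum_distrib_left)
  finally have le: "(\<Sum>zs'\<in>lists_n n. outz zs' * (if zs' ! i = zs ! i then 1 else 0)) \<le> real n * avgZ (zs ! i)"
    by (simp add: outz_sum)
  have "outz zs * (if zs ! i = zs ! i then 1 else 0) \<le> (\<Sum>zs'\<in>lists_n n. outz zs' * (if zs' ! i = zs ! i then 1 else 0))"
    by (rule member_le_sum[OF assms(2)]) (auto intro: outz_nn)
  hence "0 < real n * avgZ (zs ! i)" using le assms(1) by simp
  thus ?thesis using n_pos by (simp add: zero_less_mult_iff)
qed

lemma avgZ_sum: "(\<Sum>z\<in>UNIV. avgZ z) = 1" unfolding avgZ_def by (rule mixZ_sum[OF avg_strat_sum])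

lemma avgZ_nn: "0 \<le> avgZ z" unfolding avgZ_def by (rule mixZ_nn[OF avg_strat_nn])

lemma outz_entropy_ge: "real n * (\<Sum>z\<in>UNIV. avgZ z * ln (avgZ z)) \<le> (\<Sum>zs\<in>lists_n n. outz zs * ln (outz zs))"
proof -
  define Pz where "Pz zs = (\<Prod>i<n. avgZ (zs ! i))" for zs
  have "outz zs * (\<Sum>i<n. ln (avgZ (zs ! i))) \<le> outz zs * ln (outz zs) + (Pz zs - outz zs)"
    if zs: "zs \<in> lists_n n" for zs
  proof (cases "outz zs = 0")
    case True thus ?thesis using zs by (simp add: Pz_def prod_nonneg avgZ_nn)
  next
    case False
    hence outz_pos: "0 < outz zs" using outz_nn[of zs] by simp
    hence avgZ_pos: "\<And>i. i < n \<Longrightarrow> 0 < avgZ (zs ! i)" using avgZ_pos[OF _ zs] by simp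
    hence "(\<Sum>i<n. ln (avgZ (zs ! i))) = ln (Pz zs)"
      unfolding Pz_def by (subst ln_prod) (auto simp: less_imp_neq[symmetric])
    moreover have "0 < Pz zs" unfolding Pz_def using avgZ_pos by (intro prod_pos) auto
    ultimately show ?thesis using xlnx_diff_ge[of "outz zs" "Pz zs"] outz_pos by simp
  qed
  hence "(\<Sum>zs\<in>lists_n n. outz zs * (\<Sum>i<n. ln (avgZ (zs ! i))))
      \<le> (\<Sum>zs\<in>lists_n n. outz zs * ln (outz zs) + (Pz zs - outz zs))"
    by (intro sum_mono)
  also have "\<dots> = (\<Sum>zs\<in>lists_n n. outz zs * ln (outz zs))"
    using sum_prod_lists_n[of "\<lambda>i. avgZ" n]
    by (simp add: sum.distrib sum_subtractf Pz_def avgZ_sum outz_total)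
  finally show ?thesis using outz_time_average[of "\<lambda>z. ln (avgZ z)"] by simp
qed

lemma kl_div_ge_rel_ent:
  assumes Q_pos: "\<And>z. 0 < Q z"
  shows "real n * rel_ent avgZ Q / ln 2 \<le> kl_div n outz (\<lambda>zs. \<Prod>i<length zs. Q (zs ! i))"
proof -
  have "(\<Sum>zs\<in>lists_n n. outz zs * ln (\<Prod>i<length zs. Q (zs ! i)))
      = (\<Sum>zs\<in>lists_n n. outz zs * (\<Sum>i<n. ln (Q (zs ! i))))"
    by (intro sum.cong refl) (auto simp: lists_n_def ln_prod Q_pos less_imp_neq[symmetric])
  also have "\<dots> = real n * (\<Sum>z\<in>UNIV. avgZ z * ln (Q z))" by (rule outz_time_average)
  finally have "real n * rel_ent avgZ Q
      \<le> (\<Sum>zs\<in>lists_n n. outz zs * ln (outz zs)) - (\<Sum>zs\<in>lists_n n. outz zs * ln (\<Prod>i<length zs. Q (zs ! i)))"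
    using outz_entropy_ge by (simp add: rel_ent_def sum_subtractf algebra_simps)
  also have "\<dots> = kl_div n outz (\<lambda>zs. \<Prod>i<length zs. Q (zs ! i)) * ln 2"
    using kl_div_eq_diff[of outz "\<lambda>zs. \<Prod>i<length zs. Q (zs ! i)" n] outz_nn Q_pos by (simp add: prod_pos)
  finally show ?thesis by (simp add: pos_divide_le_eq)
qed

end

section \<open>The converse\<close>

context causal_channel begin

lemma limsup_cost_imp_mix_cost_le:
  assumes s: "strict_mono s" and conv: "\<And>u. (\<lambda>j. p j u) \<longlonglongrightarrow> L u"
    and cost: "\<And>j. a (s j) = mix_cost b (p j)"
    and ls: "limsup (\<lambda>n. ereal (a n)) \<le> ereal B"
  shows "mix_cost b L \<le> B"
proof -
  have "(\<lambda>j. ereal (a (s j))) \<longlonglongrightarrow> ereal (mix_cost b L)"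
    unfolding cost by (intro tendsto_ereal mix_cost_tendsto conv)
  hence "limsup ((\<lambda>n. ereal (a n)) \<circ> s) = ereal (mix_cost b L)"
    by (intro lim_imp_Limsup) (simp_all add: o_def)
  moreover have "limsup ((\<lambda>n. ereal (a n)) \<circ> s) \<le> limsup (\<lambda>n. ereal (a n))"
    by (rule limsup_subseq_mono[OF s])
  ultimately have "ereal (mix_cost b L) \<le> ereal B" using ls by (metis order_trans)
  thus ?thesis by simp
qed

lemma vanishing_kl_imp_mixZ_eq:
  assumes s: "strict_mono s" and conv: "\<And>u. (\<lambda>j. p j u) \<longlonglongrightarrow> L u"
    and L_nn: "\<And>u. 0 \<le> L u" and L_sum: "(\<Sum>u\<in>UNIV. L u) = 1"
    and Q_pos: "\<And>z. 0 < Q z" and Q_sum: "(\<Sum>z\<in>UNIV. Q z) = 1"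
    and kl: "kl \<longlonglongrightarrow> 0" and s_pos: "\<And>j. 0 < s j"
    and div: "\<And>j. real (s j) * rel_ent (mixZ (p j)) Q / ln 2 \<le> kl (s j)"
  shows "mixZ L = Q"
proof (rule kl_nonpos_imp_eq)
  show "\<And>z. 0 \<le> mixZ L z" by (rule mixZ_nn[OF L_nn])
  show "(\<Sum>z\<in>UNIV. mixZ L z) = 1" by (rule mixZ_sum[OF L_sum])
  have le: "rel_ent (mixZ (p j)) Q \<le> kl (s j) * ln 2 * inverse (real (s j))" for j
    using div[of j] s_pos[of j] by (simp add: field_simps)
  have inv0: "(\<lambda>j. inverse (real (s j))) \<longlonglongrightarrow> 0"
    using LIMSEQ_subseq_LIMSEQ[OF lim_inverse_n s] by (simp add: o_def)
  have "(\<lambda>j. kl (s j) * ln 2 * inverse (real (s j))) \<longlonglongrightarrow> 0 * ln 2 * 0"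
    using LIMSEQ_subseq_LIMSEQ[OF kl s] inv0 by (intro tendsto_mult tendsto_const) (simp_all add: o_def)
  moreover have "(\<lambda>j. rel_ent (mixZ (p j)) Q) \<longlonglongrightarrow> rel_ent (mixZ L) Q"
    by (rule rel_ent_tendsto) (rule conv)
  ultimately have "rel_ent (mixZ L) Q \<le> 0 * ln 2 * 0"
    using le by (intro LIMSEQ_le) auto
  thus "(\<Sum>z\<in>UNIV. mixZ L z * ln (mixZ L z) - mixZ L z * ln (Q z)) \<le> 0"
    by (simp add: rel_ent_def)
qed (use Q_pos Q_sum in auto)

lemma vanishing_error_imp_rate_le_info:
  assumes s: "strict_mono s" and conv: "\<And>u. (\<lambda>j. p j u) \<longlonglongrightarrow> L u"
    and er: "er \<longlonglongrightarrow> 0" and er_le: "\<And>j. er (s j) \<le> 1" and s_pos: "\<And>j. 0 < s j"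
    and fano: "\<And>j. ln (real (set_size (s j) R)) - ln 2 - er (s j) * ln (real (set_size (s j) R))
                    \<le> real (s j) * info (p j)"
  shows "R \<le> info L / ln 2"
proof -
  have le: "R * (1 - er (s j)) - inverse (real (s j)) \<le> info (p j) / ln 2" for j
  proof -
    define n where "n = s j"
    have n_pos: "0 < real n" using s_pos by (simp add: n_def)
    have "(1 - er n) * (real n * R * ln 2) \<le> (1 - er n) * ln (real (set_size n R))"
      using er_le[of j] ln_set_size_ge[of n R] by (intro mult_left_mono) (auto simp: n_def)
    hence "(R * (1 - er n)) * (real n * ln 2) \<le> real n * info (p j) + ln 2"
      using fano[of j] by (simp add: n_def algebra_simps)
    hence "R * (1 - er n) \<le> (real n * info (p j) + ln 2) / (real n * ln 2)"
      using n_pos by (simp add: pos_le_divide_eq)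
    also have "\<dots> = info (p j) / ln 2 + inverse (real n)" using n_pos by (simp add: field_simps)
    finally show ?thesis by (simp add: n_def)
  qed
  have "(\<lambda>j. R * (1 - er (s j)) - inverse (real (s j))) \<longlonglongrightarrow> R * (1 - 0) - 0"
    using LIMSEQ_subseq_LIMSEQ[OF er s] LIMSEQ_subseq_LIMSEQ[OF lim_inverse_n s]
    by (intro tendsto_intros) (simp_all add: o_def)
  moreover have "(\<lambda>j. info (p j) / ln 2) \<longlonglongrightarrow> info L / ln 2"
    by (intro tendsto_divide info_tendsto conv tendsto_const) simp
  ultimately have "R * (1 - 0) - 0 \<le> info L / ln 2"
    by (rule LIMSEQ_le) (use le in auto)
  thus ?thesis by simp
qed

lemma achievable_imp_feasible_strategy_dist:
  assumes Q0_pos: "\<And>z. 0 < Q0 PS W x0 z" and ach: "achievable_causal PS W x0 b RK B R"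
  shows "\<exists>L. (\<forall>u. 0 \<le> L u) \<and> (\<Sum>u\<in>UNIV. L u) = 1 \<and> mixZ L = Q0 PS W x0 \<and> mix_cost b L \<le> B
           \<and> R \<le> info L / ln 2"
proof -
  obtain E w and dec :: "nat \<Rightarrow> nat \<Rightarrow> 'y list \<Rightarrow> nat"
    where code: "\<And>n. valid_code (E n) (w n)"
      and cost: "limsup (\<lambda>n. ereal (exp_cost PS W b n (set_size n R) (set_size n RK) (E n) (w n))) \<le> ereal B"
      and err: "(\<lambda>n. err_prob PS W n (set_size n R) (set_size n RK) (E n) (w n) (dec n)) \<longlonglongrightarrow> 0"
      and kl: "(\<lambda>n. kl_div n (out_z PS W n (set_size n R) (set_size n RK) (E n) (w n)) (Q0_n PS W x0)) \<longlonglongrightarrow> 0"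
    using ach unfolding achievable_causal_def by blast
  define p where "p n = causal_code.avg_strat PS n (set_size n R) (set_size n RK) (E n) (w n)" for n
  have single_letter: "(\<forall>u. 0 \<le> p n u) \<and> (\<Sum>u\<in>UNIV. p n u) = 1
      \<and> exp_cost PS W b n (set_size n R) (set_size n RK) (E n) (w n) = mix_cost b (p n)
      \<and> real n * rel_ent (mixZ (p n)) (Q0 PS W x0) / ln 2
          \<le> kl_div n (out_z PS W n (set_size n R) (set_size n RK) (E n) (w n)) (Q0_n PS W x0)
      \<and> ln (real (set_size n R)) - ln 2
          - err_prob PS W n (set_size n R) (set_size n RK) (E n) (w n) (dec n) * ln (real (set_size n R))
          \<le> real n * info (p n)
      \<and> err_prob PS W n (set_size n R) (set_size n RK) (E n) (w n) (dec n) \<le> 1" if "0 < n" for n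
  proof -
    interpret causal_code PS W n "set_size n R" "set_size n RK" "E n" "w n"
      using code[of n] that set_size_pos by unfold_locales (auto simp: valid_code_def)
    show ?thesis
      using avg_strat_nn avg_strat_sum exp_cost_eq[of b] kl_div_ge_rel_ent[OF Q0_pos]
        fano_rate_bound[of "dec n"] err_prob_bounds[of "dec n"]
      by (auto simp: p_def mix_cost_def avgZ_def outz_def Q0_n_def[abs_def])
  qed
  obtain s L where s: "strict_mono s" and s_pos: "\<And>j. 0 < s j"
      and conv_s: "\<And>u. (\<lambda>j. p (s j) u) \<longlonglongrightarrow> L u" and L_nn: "\<And>u. 0 \<le> L u" and L_sum: "(\<Sum>u\<in>UNIV. L u) = 1"
    using distribution_seq_convergent_subseq[of p] single_letter by blast
  have Q0_sum: "(\<Sum>z\<in>UNIV. Q0 PS W x0 z) = 1" by (simp add: Q0_eq_outZ outZ_sum)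
  have "mix_cost b L \<le> B"
    by (rule limsup_cost_imp_mix_cost_le[where p="\<lambda>j. p (s j)", OF s conv_s _ cost])
       (use single_letter s_pos in auto)
  moreover have "mixZ L = Q0 PS W x0"
    by (rule vanishing_kl_imp_mixZ_eq[where p="\<lambda>j. p (s j)", OF s conv_s L_nn L_sum Q0_pos Q0_sum kl s_pos])
       (use single_letter s_pos in auto)
  moreover have "R \<le> info L / ln 2"
    by (rule vanishing_error_imp_rate_le_info[where p="\<lambda>j. p (s j)", OF s conv_s err _ s_pos])
       (use single_letter s_pos in auto)
  ultimately show ?thesis using L_nn L_sum by blast
qed

end

theorem theorem1:
  fixes PS :: "'s::finite \<Rightarrow> real"
    and W :: "'s \<Rightarrow> 'x::finite \<Rightarrow> 'y::finite \<Rightarrow> 'z::finite \<Rightarrow> real"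
    and x0 :: 'x
    and b :: "'x \<Rightarrow> real"
    and RK B :: real
  assumes "\<forall>s. 0 \<le> PS s" and "(\<Sum>s\<in>UNIV. PS s) = 1"
    and "\<forall>s x y z. 0 \<le> W s x y z"
    and "\<forall>s x. (\<Sum>y\<in>UNIV. \<Sum>z\<in>UNIV. W s x y z) = 1"
    and "\<forall>z. 0 < Q0 PS W x0 z"
    and "\<forall>x. 0 \<le> b x"
    and "0 \<le> RK" and "0 \<le> B"
  shows "covert_capacity_causal PS W x0 b RK B \<le> causal_bound PS W x0 b B"
  unfolding covert_capacity_causal_def
proof (rule Sup_least)
  interpret causal_channel PS W using assms(1-4) by unfold_locales auto
  fix r assume "r \<in> ereal ` {R. achievable_causal PS W x0 b RK B R}"
  then obtain R where r: "r = ereal R" and "achievable_causal PS W x0 b RK B R" by auto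
  then obtain L where L: "\<forall>u. 0 \<le> L u" "(\<Sum>u\<in>UNIV. L u) = 1" "mixZ L = Q0 PS W x0" "mix_cost b L \<le> B"
      and rate: "R \<le> info L / ln 2"
    using achievable_imp_feasible_strategy_dist assms(5) by blast
  have "ereal (info L / ln 2) \<le> causal_bound PS W x0 b B"
    using L by (intro info_le_causal_bound) auto
  thus "r \<le> causal_bound PS W x0 b B" using rate r by (meson ereal_less_eq(3) order_trans)
qed

end
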